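(* Let $\tau_3$ be the Hopf algebra automorphism of $H_8$ with $\tau_3(x)=y$, $\tau_3(y)=x$, $\tau_3(z)=\frac12(z+xz+yz-xyz)$. Then: (1) $(M\langle b\mathrm{i},x\rangle)^{\tau_3}\cong M\langle-b\mathrm{i},y\rangle$ for $b=\pm1$; (2) $(M\langle(xy,x)\rangle)^{\tau_3}\cong M\langle(y,xy)\rangle$ and $(W^{b_1,-1})^{\tau_3}\cong W^{-b_1,-1}$ for $b_1=\pm1$; (3) there are Hopf algebra isomorphisms $\mathfrak{B}(\Omega_2(n_1,n_2))\#H_8\cong\mathfrak{B}(\Omega_3(n_2,n_1))\#H_8$ and $\mathfrak{B}(\Omega_4(n_1,n_2))\#H_8\cong\mathfrak{B}(\Omega_5(n_2,n_1))\#H_8$ for all $n_1,n_2\ge0$.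
   Context: $\mathbb{K}$ is an algebraically closed field of characteristic $0$, $\mathrm{i}\in\mathbb{K}$ a fixed square root of $-1$. $H_8$ is the Hopf algebra generated by $x,y,z$ with $x^2=y^2=1$, $z^2=\frac12(1+x+y-xy)$, $xy=yx$, $zx=yz$, $zy=xz$, $\Delta(x)=x\otimes x$, $\Delta(y)=y\otimes y$, $\Delta(z)=\frac12(1\otimes1+1\otimes x+y\otimes1-y\otimes x)(z\otimes z)$, $\varepsilon=1$ on generators, $S(x)=x,S(y)=y,S(z)=z$. Put $f_{jk}=\frac14(1+(-1)^jx)(1+(-1)^ky)$. ${}^{H_8}_{H_8}\mathcal{YD}$ is the category of left Yetter–Drinfeld modules over $H_8$. For a Hopf automorphism $\psi$ of $H_8$ and $V\in{}^{H_8}_{H_8}\mathcal{YD}$, $V^\psi$ is the same vector space with action $h\cdot_\psi v=\psi(h)\cdot v$ and coaction $\rho^\psi=(\psi^{-1}\otimes\mathrm{id})\rho$; it is again a Yetter–Drinfeld module. $\mathfrak{B}(V)$ is the Nichols algebra of $V$; for a braided Hopf algebra $A$ in ${}^{H_8}_{H_8}\mathcal{YD}$, $A\#H_8$ is the Radford biproduct (bosonization): $A\otimes H_8$ with $(a\#h)(a'\#h')=a(h_{(1)}\cdot a')\#h_{(2)}h'$ and $\Delta(a\#h)=a^{(1)}\#(a^{(2)})_{(-1)}h_{(1)}\otimes(a^{(2)})_{(0)}\#h_{(2)}$. Modules (action and coaction on a basis): $M\langle b,g\rangle=\mathbb{K}p$ ($b\in\{\pm\mathrm{i}\}$, $g\in\{x,y\}$)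 with $x\cdot p=y\cdot p=b^2p$, $z\cdot p=bp$, $\rho(p)=g\otimes p$. For $(g_1,g_2)\in\{(xy,x),(y,xy)\}$, $M\langle(g_1,g_2)\rangle$ has basis $p_1,p_2$, $x\cdot p_1=p_1$, $x\cdot p_2=-p_2$, $y\cdot p_1=-p_1$, $y\cdot p_2=p_2$, $z\cdot p_1=p_2$, $z\cdot p_2=p_1$, $\rho(p_k)=g_k\otimes p_k$. For $b_1\in\{\pm1\}$, $W^{b_1,-1}$ has basis $p_1,p_2$, $x\cdot p_1=y\cdot p_1=p_1$, $x\cdot p_2=y\cdot p_2=-p_2$, $z\cdot p_1=-p_1$, $z\cdot p_2=\mathrm{i}b_1p_2$, $\rho(p_1)=(f_{00}-\mathrm{i}b_1f_{11})z\otimes p_1+(f_{10}+\mathrm{i}b_1f_{01})z\otimes p_2$, $\rho(p_2)=(f_{00}+\mathrm{i}b_1f_{11})z\otimes p_2+(f_{10}-\mathrm{i}b_1f_{01})z\otimes p_1$. $\Omega_2(n_1,n_2)=M\langle\mathrm{i},x\rangle^{n_1}\oplus M\langle-\mathrm{i},x\rangle^{n_2}\oplus M\langle(xy,x)\rangle$; $\Omega_3(n_1,n_2)=M\langle\mathrm{i},y\rangle^{n_1}\oplus M\langle-\mathrm{i},y\rangle^{n_2}\oplus M\langle(y,xy)\rangle$; $\Omega_4(n_1,n_2)=M\langle\mathrm{i},x\rangle^{n_1}\oplus M\langle\mathrm{i},y\rangle^{n_2}\oplus W^{1,-1}$; $\Omega_5(n_1,n_2)=M\langle-\mathrm{i},x\rangle^{n_1}\oplus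 M\langle-\mathrm{i},y\rangle^{n_2}\oplus W^{-1,-1}$. *)

theory Defs
  imports Main "HOL-Computational_Algebra.Polynomial"
begin

text \<open>A vector with basis indexed by type 'p is a function 'p => 'k (always used with
finite support).  Linear maps out of such a free space are determined by the images
of basis vectors; lin f is the linear extension of f.\<close>

definition e :: "'p \<Rightarrow> 'p \<Rightarrow> 'k::field" where
  "e p = (\<lambda>q. if q = p then 1 else 0)"

definition vadd :: "('p \<Rightarrow> 'k::field) \<Rightarrow> ('p \<Rightarrow> 'k) \<Rightarrow> 'p \<Rightarrow> 'k" where
  "vadd u v = (\<lambda>p. u p + v p)"

definition vsub :: "('p \<Rightarrow> 'k::field) \<Rightarrow> ('p \<Rightarrow> 'k) \<Rightarrow> 'p \<Rightarrow> 'k" where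
  "vsub u v = (\<lambda>p. u p - v p)"

definition vsc :: "'k::field \<Rightarrow> ('p \<Rightarrow> 'k) \<Rightarrow> 'p \<Rightarrow> 'k" where
  "vsc c u = (\<lambda>p. c * u p)"

definition vzero :: "'p \<Rightarrow> 'k::field" where
  "vzero = (\<lambda>p. 0)"

definition lin :: "('p \<Rightarrow> 'q \<Rightarrow> 'k::field) \<Rightarrow> ('p \<Rightarrow> 'k) \<Rightarrow> 'q \<Rightarrow> 'k" where
  "lin f u = (\<lambda>q. \<Sum>p\<in>{p. u p \<noteq> 0}. u p * f p q)"

definition bil :: "('p \<Rightarrow> 'q \<Rightarrow> 'r \<Rightarrow> 'k::field) \<Rightarrow> ('p \<Rightarrow> 'k) \<Rightarrow> ('q \<Rightarrow> 'k) \<Rightarrow> 'r \<Rightarrow> 'k" where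
  "bil f u v = lin (\<lambda>p. lin (f p) v) u"

definition vmap :: "('p \<Rightarrow> 'q) \<Rightarrow> ('p \<Rightarrow> 'k::field) \<Rightarrow> 'q \<Rightarrow> 'k" where
  "vmap f u = lin (\<lambda>p. e (f p)) u"

definition tens :: "('p \<Rightarrow> 'k::field) \<Rightarrow> ('q \<Rightarrow> 'k) \<Rightarrow> 'p \<times> 'q \<Rightarrow> 'k" where
  "tens u v = (\<lambda>(p, q). u p * v q)"

definition fsupp :: "('p \<Rightarrow> 'k::zero) \<Rightarrow> bool" where
  "fsupp u \<longleftrightarrow> finite {p. u p \<noteq> 0}"

definition lspan :: "('p \<Rightarrow> 'k::field) set \<Rightarrow> ('p \<Rightarrow> 'k) set" where
  "lspan S = {v. \<exists>F c. finite F \<and> F \<subseteq> S \<and> v = (\<lambda>p. \<Sum>s\<in>F. c s * s p)}"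

text \<open>Basis of H8: (a,b,c) stands for x^a y^b z^c.\<close>
type_synonym hb = "bool \<times> bool \<times> bool"

definition h1 :: hb where "h1 = (False, False, False)"
definition hx :: hb where "hx = (True, False, False)"
definition hy :: hb where "hy = (False, True, False)"
definition hxy :: hb where "hxy = (True, True, False)"
definition hz :: hb where "hz = (False, False, True)"

text \<open>Product of basis elements, using zx = yz, zy = xz, z^2 = (1+x+y-xy)/2.\<close>
definition h8m :: "hb \<Rightarrow> hb \<Rightarrow> hb \<Rightarrow> 'k::field" where
  "h8m p q = (case p of (a, b, c) \<Rightarrow> case q of (a', b', c') \<Rightarrow>
     if \<not> c then e (a \<noteq> a', b \<noteq> b', c')
     else (let g1 = (a \<noteq> b'); g2 = (b \<noteq> a') in
       if \<not> c' then e (g1, g2, True)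
       else vsc (1/2) (\<lambda>r. e (g1, g2, False) r + e (\<not> g1, g2, False) r
                          + e (g1, \<not> g2, False) r - e (\<not> g1, \<not> g2, False) r)))"

definition h8mult :: "(hb \<Rightarrow> 'k::field) \<Rightarrow> (hb \<Rightarrow> 'k) \<Rightarrow> hb \<Rightarrow> 'k" where
  "h8mult u v = bil h8m u v"

definition h8tmult :: "(hb \<times> hb \<Rightarrow> 'k::field) \<Rightarrow> (hb \<times> hb \<Rightarrow> 'k) \<Rightarrow> hb \<times> hb \<Rightarrow> 'k" where
  "h8tmult u v = bil (\<lambda>(p, q) (p', q'). tens (h8m p p') (h8m q q')) u v"

definition dz :: "hb \<times> hb \<Rightarrow> 'k::field" where
  "dz = h8tmult (vsc (1/2) (\<lambda>r. e (h1, h1) r + e (h1, hx) r + e (hy, h1) r - e (hy, hx) r))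
               (e (hz, hz))"

text \<open>Comultiplication, as the algebra map with the given values on x, y, z.\<close>
definition h8comult :: "hb \<Rightarrow> hb \<times> hb \<Rightarrow> 'k::field" where
  "h8comult p = (case p of (a, b, c) \<Rightarrow>
     h8tmult (h8tmult (if a then e (hx, hx) else e (h1, h1))
                      (if b then e (hy, hy) else e (h1, h1)))
             (if c then dz else e (h1, h1)))"

text \<open>Counit: epsilon = 1 on all generators, hence on all basis monomials.\<close>
definition h8counit :: "hb \<Rightarrow> 'k::field" where
  "h8counit p = 1"

definition f_idem :: "nat \<Rightarrow> nat \<Rightarrow> hb \<Rightarrow> 'k::field" where
  "f_idem j k = vsc (1/4) (h8mult (vadd (e h1) (vsc ((-1) ^ j) (e hx)))
                                  (vadd (e h1) (vsc ((-1) ^ k) (e hy))))"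

definition tau3z :: "hb \<Rightarrow> 'k::field" where
  "tau3z = vsc (1/2) (\<lambda>r. e (False, False, True) r + e (True, False, True) r
                          + e (False, True, True) r - e (True, True, True) r)"

definition tau3b :: "hb \<Rightarrow> hb \<Rightarrow> 'k::field" where
  "tau3b p = (case p of (a, b, c) \<Rightarrow>
     h8mult (h8mult (if a then e hy else e h1) (if b then e hx else e h1))
            (if c then tau3z else e h1))"

definition tau3 :: "(hb \<Rightarrow> 'k::field) \<Rightarrow> hb \<Rightarrow> 'k" where
  "tau3 = lin tau3b"

text \<open>ybas: the basis; yact h b = h . b for basis elements h of H8;
  ycoact b = rho(b) in H8 \<otimes> V.\<close>
record ('k, 'b) ydm =
  ybas :: "'b set"
  yact :: "hb \<Rightarrow> 'b \<Rightarrow> 'b \<Rightarrow> 'k"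
  ycoact :: "'b \<Rightarrow> hb \<times> 'b \<Rightarrow> 'k"

text \<open>Action of x^a y^b z^c determined by the actions X, Y, Z of the generators.\<close>
definition gen_act :: "('b \<Rightarrow> 'b \<Rightarrow> 'k::field) \<Rightarrow> ('b \<Rightarrow> 'b \<Rightarrow> 'k) \<Rightarrow> ('b \<Rightarrow> 'b \<Rightarrow> 'k)
                       \<Rightarrow> hb \<Rightarrow> 'b \<Rightarrow> 'b \<Rightarrow> 'k" where
  "gen_act X Y Z p v = (case p of (a, b, c) \<Rightarrow>
     (if a then lin X else id) ((if b then lin Y else id) ((if c then lin Z else id) (e v))))"

definition Mbg :: "'k::field \<Rightarrow> hb \<Rightarrow> ('k, unit) ydm" where
  "Mbg b g = \<lparr> ybas = {()},
      yact = gen_act (\<lambda>v. vsc (b^2) (e v)) (\<lambda>v. vsc (b^2) (e v)) (\<lambda>v. vsc b (e v)),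
      ycoact = (\<lambda>v. e (g, v)) \<rparr>"

text \<open>M<(g1,g2)>, basis p1 = False, p2 = True.\<close>
definition Mpair :: "hb \<Rightarrow> hb \<Rightarrow> ('k::field, bool) ydm" where
  "Mpair g1 g2 = \<lparr> ybas = UNIV,
      yact = gen_act (\<lambda>v. if v then vsc (-1) (e True) else e False)
                     (\<lambda>v. if v then e True else vsc (-1) (e False))
                     (\<lambda>v. e (\<not> v)),
      ycoact = (\<lambda>v. if v then e (g2, True) else e (g1, False)) \<rparr>"

text \<open>W^{b1,-1}, basis p1 = False, p2 = True; i is the fixed square root of -1.\<close>
definition Wmod :: "'k::field \<Rightarrow> 'k \<Rightarrow> ('k, bool) ydm" where
  "Wmod i b1 = \<lparr> ybas = UNIV,
      yact = gen_act (\<lambda>v. if v then vsc (-1) (e True) else e False)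
                     (\<lambda>v. if v then vsc (-1) (e True) else e False)
                     (\<lambda>v. if v then vsc (i * b1) (e True) else vsc (-1) (e False)),
      ycoact = (\<lambda>v. if \<not> v then
          vadd (tens (h8mult (vsub (f_idem 0 0) (vsc (i * b1) (f_idem 1 1))) (e hz)) (e False))
               (tens (h8mult (vadd (f_idem 1 0) (vsc (i * b1) (f_idem 0 1))) (e hz)) (e True))
        else
          vadd (tens (h8mult (vadd (f_idem 0 0) (vsc (i * b1) (f_idem 1 1))) (e hz)) (e True))
               (tens (h8mult (vsub (f_idem 1 0) (vsc (i * b1) (f_idem 0 1))) (e hz)) (e False))) \<rparr>"

definition ydsum :: "('k::field, 'b) ydm \<Rightarrow> ('k, 'c) ydm \<Rightarrow> ('k, 'b + 'c) ydm" where
  "ydsum V W = \<lparr> ybas = Inl ` ybas V \<union> Inr ` ybas W,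
      yact = (\<lambda>h v. case v of Inl b \<Rightarrow> vmap Inl (yact V h b) | Inr c \<Rightarrow> vmap Inr (yact W h c)),
      ycoact = (\<lambda>v. case v of Inl b \<Rightarrow> vmap (\<lambda>(g, b'). (g, Inl b')) (ycoact V b)
                             | Inr c \<Rightarrow> vmap (\<lambda>(g, c'). (g, Inr c')) (ycoact W c)) \<rparr>"

definition ydpow :: "nat \<Rightarrow> ('k::field, 'b) ydm \<Rightarrow> ('k, nat \<times> 'b) ydm" where
  "ydpow n V = \<lparr> ybas = {(j, b). j < n \<and> b \<in> ybas V},
      yact = (\<lambda>h (j, b). vmap (\<lambda>b'. (j, b')) (yact V h b)),
      ycoact = (\<lambda>(j, b). vmap (\<lambda>(g, b'). (g, (j, b'))) (ycoact V b)) \<rparr>"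

definition Omega2 :: "'k::field \<Rightarrow> nat \<Rightarrow> nat \<Rightarrow> ('k, (nat \<times> unit) + ((nat \<times> unit) + bool)) ydm" where
  "Omega2 i n1 n2 = ydsum (ydpow n1 (Mbg i hx)) (ydsum (ydpow n2 (Mbg (-i) hx)) (Mpair hxy hx))"

definition Omega3 :: "'k::field \<Rightarrow> nat \<Rightarrow> nat \<Rightarrow> ('k, (nat \<times> unit) + ((nat \<times> unit) + bool)) ydm" where
  "Omega3 i n1 n2 = ydsum (ydpow n1 (Mbg i hy)) (ydsum (ydpow n2 (Mbg (-i) hy)) (Mpair hy hxy))"

definition Omega4 :: "'k::field \<Rightarrow> nat \<Rightarrow> nat \<Rightarrow> ('k, (nat \<times> unit) + ((nat \<times> unit) + bool)) ydm" where
  "Omega4 i n1 n2 = ydsum (ydpow n1 (Mbg i hx)) (ydsum (ydpow n2 (Mbg i hy)) (Wmod i 1))"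

definition Omega5 :: "'k::field \<Rightarrow> nat \<Rightarrow> nat \<Rightarrow> ('k, (nat \<times> unit) + ((nat \<times> unit) + bool)) ydm" where
  "Omega5 i n1 n2 = ydsum (ydpow n1 (Mbg (-i) hx)) (ydsum (ydpow n2 (Mbg (-i) hy)) (Wmod i (-1)))"

definition twist :: "((hb \<Rightarrow> 'k) \<Rightarrow> hb \<Rightarrow> 'k::field) \<Rightarrow> ('k, 'b) ydm \<Rightarrow> ('k, 'b) ydm" where
  "twist psi V = \<lparr> ybas = ybas V,
      yact = (\<lambda>h b. lin (\<lambda>h'. yact V h' b) (psi (e h))),
      ycoact = (\<lambda>b. lin (\<lambda>(g, c). tens (inv psi (e g)) (e c)) (ycoact V b)) \<rparr>"

definition Vsp :: "('k::field, 'b) ydm \<Rightarrow> ('b \<Rightarrow> 'k) set" where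
  "Vsp V = {v. \<forall>b. v b \<noteq> 0 \<longrightarrow> b \<in> ybas V}"

definition yd_iso :: "('k::field, 'b) ydm \<Rightarrow> ('k, 'c) ydm \<Rightarrow> bool" where
  "yd_iso V W \<longleftrightarrow> (\<exists>F :: 'b \<Rightarrow> 'c \<Rightarrow> 'k.
     (\<forall>b\<in>ybas V. F b \<in> Vsp W) \<and>
     bij_betw (lin F) (Vsp V) (Vsp W) \<and>
     (\<forall>h. \<forall>b\<in>ybas V. lin (yact W h) (F b) = lin F (yact V h b)) \<and>
     (\<forall>b\<in>ybas V. lin (\<lambda>(g, c). tens (e g) (F c)) (ycoact V b) = lin (ycoact W) (F b)))"

text \<open>Basis of T(V): words (lists) of basis elements of V.\<close>
definition TV :: "('k::field, 'b) ydm \<Rightarrow> ('b list \<Rightarrow> 'k) set" where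
  "TV V = {u. fsupp u \<and> (\<forall>w. u w \<noteq> 0 \<longrightarrow> set w \<subseteq> ybas V)}"

definition tmult :: "('b list \<Rightarrow> 'k::field) \<Rightarrow> ('b list \<Rightarrow> 'k) \<Rightarrow> 'b list \<Rightarrow> 'k" where
  "tmult u v = bil (\<lambda>w w'. e (w @ w')) u v"

text \<open>Diagonal H8-action on T(V): h.(v w) = (h1.v)(h2.w).\<close>
fun actT :: "('k::field, 'b) ydm \<Rightarrow> hb \<Rightarrow> 'b list \<Rightarrow> 'b list \<Rightarrow> 'k" where
  "actT V h [] = vsc (h8counit h) (e [])"
| "actT V h (b # w) = lin (\<lambda>(h1, h2). tmult (vmap (\<lambda>c. [c]) (yact V h1 b)) (actT V h2 w))
                          (h8comult h)"

text \<open>Codiagonal coaction on T(V): rho(v w) = v_{-1} w_{-1} \<otimes> v_0 w_0.\<close>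
fun coactT :: "('k::field, 'b) ydm \<Rightarrow> 'b list \<Rightarrow> hb \<times> 'b list \<Rightarrow> 'k" where
  "coactT V [] = e (h1, [])"
| "coactT V (b # w) = lin (\<lambda>(g, c). lin (\<lambda>(g', w'). tens (h8m g g') (e (c # w')))
                                         (coactT V w)) (ycoact V b)"

text \<open>Braided comultiplication of T(V): the algebra map T(V) -> T(V) \<otimes> T(V) (braided
  tensor product algebra, (a \<otimes> b)(a' \<otimes> b') = a (b_{-1}.a') \<otimes> b_0 b') with v primitive.
  Computed via Delta(v w) = (v \<otimes> 1 + 1 \<otimes> v) Delta(w).\<close>
fun comultT :: "('k::field, 'b) ydm \<Rightarrow> 'b list \<Rightarrow> 'b list \<times> 'b list \<Rightarrow> 'k" where
  "comultT V [] = e ([], [])"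
| "comultT V (b # w) =
     vadd (vmap (\<lambda>(a, c). (b # a, c)) (comultT V w))
          (lin (\<lambda>(a, c). lin (\<lambda>(g, d). tens (actT V g a) (e (d # c))) (ycoact V b))
               (comultT V w))"

definition counitT :: "'b list \<Rightarrow> 'k::field" where
  "counitT w = (if w = [] then 1 else 0)"

definition coideal_target :: "('b list \<Rightarrow> 'k::field) set \<Rightarrow> ('b list \<Rightarrow> 'k) set
                               \<Rightarrow> ('b list \<times> 'b list \<Rightarrow> 'k) set" where
  "coideal_target J T = lspan ({tens j t | j t. j \<in> J \<and> t \<in> T} \<union> {tens t j | j t. j \<in> J \<and> t \<in> T})"

definition nichols_admissible :: "('k::field, 'b) ydm \<Rightarrow> ('b list \<Rightarrow> 'k) set \<Rightarrow> bool" where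
  "nichols_admissible V J \<longleftrightarrow>
     J \<subseteq> TV V \<and> vzero \<in> J \<and>
     (\<forall>u\<in>J. \<forall>v\<in>J. vadd u v \<in> J) \<and> (\<forall>c. \<forall>u\<in>J. vsc c u \<in> J) \<and>
     (\<forall>u\<in>J. \<forall>n. (\<lambda>w. if length w = n then u w else 0) \<in> J) \<and>
     (\<forall>u\<in>J. \<forall>w. length w < 2 \<longrightarrow> u w = 0) \<and>
     (\<forall>u\<in>J. \<forall>a\<in>TV V. \<forall>b\<in>TV V. tmult (tmult a u) b \<in> J) \<and>
     (\<forall>u\<in>J. lin (comultT V) u \<in> coideal_target J (TV V))"

text \<open>I(V): the largest N-graded ideal and coideal contained in T^{>=2}(V);
  the Nichols algebra is B(V) = T(V)/I(V).\<close>
definition nichols_ideal :: "('k::field, 'b) ydm \<Rightarrow> ('b list \<Rightarrow> 'k) set" where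
  "nichols_ideal V = \<Union>{J. nichols_admissible V J}"

section \<open>Bosonization B(V) # H8, realised as (T(V) # H8) / (I(V) \<otimes> H8)\<close>

definition BV :: "('k::field, 'b) ydm \<Rightarrow> ('b list \<times> hb \<Rightarrow> 'k) set" where
  "BV V = {u. fsupp u \<and> (\<forall>w h. u (w, h) \<noteq> 0 \<longrightarrow> set w \<subseteq> ybas V)}"

definition bbasis :: "('k::field, 'b) ydm \<Rightarrow> ('b list \<times> hb) set" where
  "bbasis V = {(w, h). set w \<subseteq> ybas V}"

text \<open>I(V) \<otimes> H8.\<close>
definition NV :: "('k::field, 'b) ydm \<Rightarrow> ('b list \<times> hb \<Rightarrow> 'k) set" where
  "NV V = {u \<in> BV V. \<forall>h. (\<lambda>w. u (w, h)) \<in> nichols_ideal V}"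

definition ptens :: "('b list \<Rightarrow> 'k::field) \<Rightarrow> (hb \<Rightarrow> 'k) \<Rightarrow> 'b list \<times> hb \<Rightarrow> 'k" where
  "ptens u v = (\<lambda>(w, h). u w * v h)"

text \<open>(a#h)(a'#h') = a (h1.a') # h2 h'.\<close>
definition bm :: "('k::field, 'b) ydm \<Rightarrow> 'b list \<times> hb \<Rightarrow> 'b list \<times> hb \<Rightarrow> 'b list \<times> hb \<Rightarrow> 'k" where
  "bm V p q = (case p of (w, h) \<Rightarrow> case q of (w', h') \<Rightarrow>
     lin (\<lambda>(h1, h2). ptens (tmult (e w) (actT V h1 w')) (h8m h2 h')) (h8comult h))"

definition bmult :: "('k::field, 'b) ydm \<Rightarrow> ('b list \<times> hb \<Rightarrow> 'k) \<Rightarrow> ('b list \<times> hb \<Rightarrow> 'k)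
                     \<Rightarrow> 'b list \<times> hb \<Rightarrow> 'k" where
  "bmult V u v = bil (bm V) u v"

definition bunit :: "'b list \<times> hb \<Rightarrow> 'k::field" where
  "bunit = e ([], h1)"

text \<open>Delta(a#h) = a^(1) # (a^(2))_{-1} h_(1) \<otimes> (a^(2))_(0) # h_(2).\<close>
definition bc :: "('k::field, 'b) ydm \<Rightarrow> 'b list \<times> hb \<Rightarrow> ('b list \<times> hb) \<times> ('b list \<times> hb) \<Rightarrow> 'k" where
  "bc V p = (case p of (w, h) \<Rightarrow>
     lin (\<lambda>(a1, a2). lin (\<lambda>(g, a2'). lin (\<lambda>(h1, h2).
            tens (ptens (e a1) (h8m g h1)) (e (a2', h2)))
          (h8comult h)) (coactT V a2)) (comultT V w))"

definition bcounit :: "'b list \<times> hb \<Rightarrow> 'k::field" where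
  "bcounit p = (case p of (w, h) \<Rightarrow> counitT w * h8counit h)"

text \<open>Isomorphism of Hopf algebras B(V)#H8 ~ B(W)#H8: a linear map
  F : T(V)#H8 -> T(W)#H8 inducing a linear bijection of the quotients by I \<otimes> H8
  which is multiplicative, unital, comultiplicative and counital on the quotients
  (a bialgebra isomorphism between Hopf algebras is a Hopf algebra isomorphism).\<close>
definition bos_iso :: "('k::field, 'b) ydm \<Rightarrow> ('k, 'c) ydm \<Rightarrow> bool" where
  "bos_iso V W \<longleftrightarrow> (\<exists>F :: 'b list \<times> hb \<Rightarrow> 'c list \<times> hb \<Rightarrow> 'k.
     (\<forall>p\<in>bbasis V. F p \<in> BV W) \<and>
     (\<forall>u\<in>NV V. lin F u \<in> NV W) \<and>
     (\<forall>u\<in>BV V. lin F u \<in> NV W \<longrightarrow> u \<in> NV V) \<and>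
     (\<forall>u'\<in>BV W. \<exists>u\<in>BV V. vsub (lin F u) u' \<in> NV W) \<and>
     vsub (lin F bunit) bunit \<in> NV W \<and>
     (\<forall>p\<in>bbasis V. \<forall>q\<in>bbasis V. vsub (lin F (bm V p q)) (bmult W (F p) (F q)) \<in> NV W) \<and>
     (\<forall>p\<in>bbasis V. vsub (lin (bc W) (F p)) (lin (\<lambda>(p1, p2). tens (F p1) (F p2)) (bc V p))
        \<in> lspan ({tens n a | n a. n \<in> NV W \<and> a \<in> BV W} \<union> {tens a n | n a. n \<in> NV W \<and> a \<in> BV W})) \<and>
     (\<forall>p\<in>bbasis V. lin (\<lambda>q (_::unit). bcounit q) (F p) () = bcounit p))"

end

theory Submission
  imports Defs
begin

text \<open>
  Each isomorphism is induced by a monomial map \<open>\<phi> b = c\<^sub>b \<sigma>(b)\<close> between the given bases,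
  where \<open>\<sigma>\<close> is a bijection and \<open>c\<^sub>b \<noteq> 0\<close>, satisfying \<open>h \<cdot> \<phi> v = \<phi> (\<tau>\<^sub>3 h \<cdot> v)\<close> and
  \<open>\<rho> \<circ> \<phi> = (\<tau>\<^sub>3 \<otimes> \<phi>) \<circ> \<rho>\<close>; since \<open>\<tau>\<^sub>3\<close> is an involutive bialgebra automorphism this says
  exactly that \<open>\<phi>\<close> is an isomorphism \<open>V\<^sup>\<tau>\<^sup>3 \<cong> W\<close> of Yetter-Drinfeld modules, which gives (1) and (2).
  For (3), \<open>\<phi>\<close> extends multiplicatively to \<open>T(V) \<rightarrow> T(W)\<close> and, tensored with \<open>\<tau>\<^sub>3\<close>, to
  \<open>T(V) # H\<^sub>8 \<rightarrow> T(W) # H\<^sub>8\<close>. Because \<open>\<phi>\<close> intertwines actions and coactions, it intertwines the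
  braidings and hence the braided coproducts, so it maps the graded Hopf ideals defining
  Nichols algebras onto each other (its inverse being a map of the same kind). It therefore
  descends to a bialgebra isomorphism of the bosonizations. For \<open>\<Omega>\<^sub>2, \<Omega>\<^sub>4\<close> the monomial maps of
  the summands are assembled, after exchanging the first two summands.
\<close>

section \<open>Finitely supported vectors\<close>

lemma lin_apply: "lin f u q = (\<Sum>p\<in>{p. u p \<noteq> 0}. u p * f p q)"
  by (simp add: lin_def)

lemma lin_sum_superset:
  assumes "finite S" "{p. u p \<noteq> 0} \<subseteq> S"
  shows "lin f u q = (\<Sum>p\<in>S. u p * f p q)"
  unfolding lin_apply using assms
  by (intro sum.mono_neutral_left) auto

lemma fsupp_fin[simp]: "fsupp (u :: 'a::finite \<Rightarrow> 'b::zero)"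
  by (simp add: fsupp_def)

lemma lin_finite: "lin f (u :: 'a::finite \<Rightarrow> 'k::field) q = (\<Sum>p\<in>UNIV. u p * f p q)"
  by (rule lin_sum_superset) auto

lemma fsupp_e[simp]: "fsupp (e p :: _ \<Rightarrow> 'k::field)"
  unfolding fsupp_def e_def by (rule finite_subset[of _ "{p}"]) auto

lemma fsupp_vadd[simp]: "fsupp u \<Longrightarrow> fsupp v \<Longrightarrow> fsupp (vadd u v)"
  unfolding fsupp_def vadd_def
  by (rule finite_subset[of _ "{p. u p \<noteq> 0} \<union> {p. v p \<noteq> 0}"]) auto

lemma fsupp_vsub[simp]: "fsupp u \<Longrightarrow> fsupp v \<Longrightarrow> fsupp (vsub u v)"
  unfolding fsupp_def vsub_def
  by (rule finite_subset[of _ "{p. u p \<noteq> 0} \<union> {p. v p \<noteq> 0}"]) auto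

lemma fsupp_vsc[simp]: "fsupp u \<Longrightarrow> fsupp (vsc c u)"
  unfolding fsupp_def vsc_def
  by (rule finite_subset[of _ "{p. u p \<noteq> 0}"]) auto

lemma fsupp_vzero[simp]: "fsupp (vzero :: _ \<Rightarrow> 'k::field)"
  by (simp add: fsupp_def vzero_def)

lemma fsupp_zero[simp]: "fsupp (\<lambda>p. 0 :: 'k::field)"
  by (simp add: fsupp_def)

lemma fsupp_lin[simp]:
  assumes "fsupp u" "\<And>p. u p \<noteq> 0 \<Longrightarrow> fsupp (f p)"
  shows "fsupp (lin f u)"
proof -
  let ?S = "{p. u p \<noteq> 0}"
  have fin: "finite ?S" using assms(1) by (simp add: fsupp_def)
  have "{q. lin f u q \<noteq> 0} \<subseteq> (\<Union>p\<in>?S. {q. f p q \<noteq> 0})"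
  proof
    fix q assume "q \<in> {q. lin f u q \<noteq> 0}"
    then have "(\<Sum>p\<in>?S. u p * f p q) \<noteq> 0" by (simp add: lin_apply)
    then obtain p where "p \<in> ?S" "u p * f p q \<noteq> 0" by (meson sum.neutral)
    then show "q \<in> (\<Union>p\<in>?S. {q. f p q \<noteq> 0})" by auto
  qed
  moreover have "finite (\<Union>p\<in>?S. {q. f p q \<noteq> 0})"
    using fin assms(2) by (auto simp: fsupp_def)
  ultimately show ?thesis unfolding fsupp_def by (rule finite_subset)
qed

lemma lin_e[simp]: "lin f (e p) = f p"
proof
  fix q
  have "lin f (e p) q = (\<Sum>p'\<in>{p}. e p p' * f p' q)"
    by (rule lin_sum_superset) (auto simp: e_def)
  then show "lin f (e p) q = f p q" by (simp add: e_def)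
qed

lemma lin_vadd:
  assumes "fsupp u" "fsupp v"
  shows "lin f (vadd u v) = vadd (lin f u) (lin f v)"
proof
  fix q
  let ?S = "{p. u p \<noteq> 0} \<union> {p. v p \<noteq> 0}"
  have fin: "finite ?S" using assms by (simp add: fsupp_def)
  have 1: "lin f (vadd u v) q = (\<Sum>p\<in>?S. vadd u v p * f p q)"
    by (rule lin_sum_superset[OF fin]) (auto simp: vadd_def)
  have 2: "lin f u q = (\<Sum>p\<in>?S. u p * f p q)" by (rule lin_sum_superset[OF fin]) auto
  have 3: "lin f v q = (\<Sum>p\<in>?S. v p * f p q)" by (rule lin_sum_superset[OF fin]) auto
  have "vadd (lin f u) (lin f v) q = lin f u q + lin f v q" by (simp add: vadd_def)
  then show "lin f (vadd u v) q = vadd (lin f u) (lin f v) q"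
    using 1 2 3 by (simp add: vadd_def sum.distrib distrib_right)
qed

lemma lin_vsub:
  assumes "fsupp u" "fsupp v"
  shows "lin f (vsub u v) = vsub (lin f u) (lin f v)"
proof
  fix q
  let ?S = "{p. u p \<noteq> 0} \<union> {p. v p \<noteq> 0}"
  have fin: "finite ?S" using assms by (simp add: fsupp_def)
  have 1: "lin f (vsub u v) q = (\<Sum>p\<in>?S. vsub u v p * f p q)"
    by (rule lin_sum_superset[OF fin]) (auto simp: vsub_def)
  have 2: "lin f u q = (\<Sum>p\<in>?S. u p * f p q)" by (rule lin_sum_superset[OF fin]) auto
  have 3: "lin f v q = (\<Sum>p\<in>?S. v p * f p q)" by (rule lin_sum_superset[OF fin]) auto
  show "lin f (vsub u v) q = vsub (lin f u) (lin f v) q"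
    using 1 2 3 by (simp add: vsub_def sum_subtractf left_diff_distrib)
qed

lemma lin_vsc: "lin f (vsc c u) = vsc c (lin f u)"
proof (cases "c = 0")
  case True then show ?thesis by (simp add: lin_def vsc_def)
next
  case False
  then have "{p. vsc c u p \<noteq> 0} = {p. u p \<noteq> 0}" by (auto simp: vsc_def)
  then show ?thesis using False
    by (simp add: lin_def vsc_def sum_distrib_left mult.assoc)
qed

lemma lin_vzero[simp]: "lin f vzero = vzero"
  by (simp add: lin_def vzero_def)

lemma lin_zero[simp]: "lin f (\<lambda>p. 0) = (\<lambda>q. 0)"
  by (simp add: lin_def)

lemma lin_vadd_fun: "lin (\<lambda>p. vadd (f p) (g p)) u = vadd (lin f u) (lin g u)"
  by (simp add: lin_def vadd_def fun_eq_iff sum.distrib distrib_left)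

lemma lin_vsc_fun: "lin (\<lambda>p. vsc c (f p)) u = vsc c (lin f u)"
  by (simp add: lin_def vsc_def fun_eq_iff sum_distrib_left mult_ac)

lemma lin_zero_fun[simp]: "lin (\<lambda>p. \<lambda>q. 0) u = (\<lambda>q. 0)"
  by (simp add: lin_def)

lemma lin_cong:
  assumes "\<And>p. u p \<noteq> 0 \<Longrightarrow> f p = g p"
  shows "lin f u = lin g u"
  using assms by (simp add: lin_def fun_eq_iff)

lemma lin_id: "fsupp u \<Longrightarrow> lin e u = u"
proof
  fix q assume "fsupp u"
  show "lin e u q = u q"
  proof (cases "u q = 0")
    case True
    then show ?thesis by (auto simp: lin_def e_def intro!: sum.neutral)
  next
    case False
    have "lin e u q = (\<Sum>p\<in>{p. u p \<noteq> 0}. u p * (if q = p then 1 else 0))"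
      by (simp add: lin_apply e_def)
    also have "\<dots> = (\<Sum>p\<in>{p. u p \<noteq> 0}. if p = q then u q else 0)"
      by (rule sum.cong) auto
    also have "\<dots> = u q" using False \<open>fsupp u\<close> by (simp add: fsupp_def)
    finally show ?thesis .
  qed
qed

lemma lin_lin:
  assumes u: "fsupp u" and g: "\<And>p. u p \<noteq> 0 \<Longrightarrow> fsupp (g p)"
  shows "lin f (lin g u) = lin (\<lambda>p. lin f (g p)) u"
proof
  fix r
  let ?S = "{p. u p \<noteq> 0}"
  let ?T = "\<Union>p\<in>?S. {q. g p q \<noteq> 0}"
  have finS: "finite ?S" using u by (simp add: fsupp_def)
  have finT: "finite ?T" using finS g by (auto simp: fsupp_def)
  have sub: "{q. lin g u q \<noteq> 0} \<subseteq> ?T"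
  proof
    fix q assume "q \<in> {q. lin g u q \<noteq> 0}"
    then have "(\<Sum>p\<in>?S. u p * g p q) \<noteq> 0" by (simp add: lin_apply)
    then obtain p where "p \<in> ?S" "u p * g p q \<noteq> 0" by (meson sum.neutral)
    then show "q \<in> ?T" by auto
  qed
  have "lin f (lin g u) r = (\<Sum>q\<in>?T. lin g u q * f q r)"
    by (rule lin_sum_superset[OF finT sub])
  also have "\<dots> = (\<Sum>q\<in>?T. (\<Sum>p\<in>?S. u p * g p q) * f q r)"
    by (simp add: lin_apply)
  also have "\<dots> = (\<Sum>p\<in>?S. u p * (\<Sum>q\<in>?T. g p q * f q r))"
    by (simp add: sum_distrib_right sum_distrib_left mult_ac sum.swap[of _ ?T])
  also have "\<dots> = (\<Sum>p\<in>?S. u p * lin f (g p) r)"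
  proof (rule sum.cong[OF refl])
    fix p assume "p \<in> ?S"
    then have "lin f (g p) r = (\<Sum>q\<in>?T. g p q * f q r)"
      by (intro lin_sum_superset finT) auto
    then show "u p * (\<Sum>q\<in>?T. g p q * f q r) = u p * lin f (g p) r" by simp
  qed
  also have "\<dots> = lin (\<lambda>p. lin f (g p)) u r" by (simp add: lin_apply)
  finally show "lin f (lin g u) r = lin (\<lambda>p. lin f (g p)) u r" .
qed

lemma lin_swap:
  assumes "fsupp u" "fsupp v"
  shows "lin (\<lambda>p. lin (K p) v) u = lin (\<lambda>q. lin (\<lambda>p. K p q) u) v"
proof
  fix r
  let ?S = "{p. u p \<noteq> 0}" and ?T = "{q. v q \<noteq> 0}"
  have fS: "finite ?S" and fT: "finite ?T" using assms by (auto simp: fsupp_def)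
  show "lin (\<lambda>p. lin (K p) v) u r = lin (\<lambda>q. lin (\<lambda>p. K p q) u) v r"
    by (simp add: lin_apply sum_distrib_left sum_distrib_right mult_ac sum.swap[of _ ?S])
qed

lemma tens_e[simp]: "tens (e p) (e q) = (e (p, q) :: _ \<Rightarrow> 'k::field)"
  by (auto simp: tens_def e_def fun_eq_iff)

lemma fsupp_tens[simp]:
  assumes "fsupp u" "fsupp v" shows "fsupp (tens u v)"
proof -
  have "{pq. tens u v pq \<noteq> 0} \<subseteq> {p. u p \<noteq> 0} \<times> {q. v q \<noteq> 0}"
    by (auto simp: tens_def)
  then show ?thesis using assms unfolding fsupp_def by (auto intro: finite_subset)
qed

lemma lin_tens:
  assumes "fsupp u" "fsupp v"
  shows "lin h (tens u v) = lin (\<lambda>p. lin (\<lambda>q. h (p, q)) v) u"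
proof
  fix r
  let ?S = "{p. u p \<noteq> 0}" and ?T = "{q. v q \<noteq> 0}"
  have fS: "finite ?S" and fT: "finite ?T" using assms by (auto simp: fsupp_def)
  have "lin h (tens u v) r = (\<Sum>pq\<in>?S \<times> ?T. tens u v pq * h pq r)"
    by (rule lin_sum_superset) (use fS fT in \<open>auto simp: tens_def\<close>)
  also have "\<dots> = (\<Sum>p\<in>?S. \<Sum>q\<in>?T. u p * v q * h (p, q) r)"
    by (simp add: sum.cartesian_product tens_def split_def)
  also have "\<dots> = lin (\<lambda>p. lin (\<lambda>q. h (p, q)) v) u r"
    by (simp add: lin_apply sum_distrib_left mult_ac)
  finally show "lin h (tens u v) r = lin (\<lambda>p. lin (\<lambda>q. h (p, q)) v) u r" .
qed

lemma tens_lin_left: "tens (lin f u) v = lin (\<lambda>p. tens (f p) v) u"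
  by (rule ext) (auto simp: tens_def lin_apply sum_distrib_right sum_distrib_left mult_ac)

lemma tens_lin_right: "tens u (lin g v) = lin (\<lambda>q. tens u (g q)) v"
  by (rule ext) (auto simp: tens_def lin_apply sum_distrib_left mult_ac)

lemma tens_lin: "tens (lin f u) (lin g v) = lin (\<lambda>p. lin (\<lambda>q. tens (f p) (g q)) v) u"
  by (simp only: tens_lin_left) (simp only: tens_lin_right)

lemma tens_vsc_left: "tens (vsc c u) v = vsc c (tens u v)"
  by (auto simp: tens_def vsc_def fun_eq_iff mult_ac)
lemma tens_vsc_right: "tens u (vsc c v) = vsc c (tens u v)"
  by (auto simp: tens_def vsc_def fun_eq_iff mult_ac)

lemma ptens_tens: "ptens = tens"
  by (auto simp: ptens_def tens_def fun_eq_iff)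

lemma bil_e1[simp]: "bil f (e p) v = lin (f p) v" by (simp add: bil_def)

lemma bil_e[simp]: "bil f (e p) (e q) = f p q" by (simp add: bil_def)

lemma lin_const_finite: "lin (\<lambda>p. v) (u :: 'a::finite \<Rightarrow> 'k::field) = vsc (\<Sum>p\<in>UNIV. u p) v"
  by (simp add: lin_finite vsc_def fun_eq_iff sum_distrib_right)

lemma lin_lin_pair:
  assumes "fsupp u" "\<And>a b. u (a, b) \<noteq> 0 \<Longrightarrow> fsupp (g a b)"
  shows "lin f (lin (\<lambda>(a, b). g a b) u) = lin (\<lambda>(a, b). lin f (g a b)) u"
proof -
  have "lin f (lin (\<lambda>(a, b). g a b) u) = lin (\<lambda>p. lin f ((\<lambda>(a, b). g a b) p)) u"
    by (rule lin_lin) (use assms in \<open>auto split: prod.splits\<close>)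
  also have "\<dots> = lin (\<lambda>(a, b). lin f (g a b)) u"
    by (rule lin_cong) (auto split: prod.splits)
  finally show ?thesis .
qed

lemma tmult_e[simp]: "tmult (e a) (e b) = (e (a @ b) :: _ \<Rightarrow> 'k::field)"
  by (simp add: tmult_def)

lemma fsupp_tmult[simp]: "fsupp u \<Longrightarrow> fsupp v \<Longrightarrow> fsupp (tmult u v)"
  by (simp add: tmult_def bil_def)

lemma tmult_vsc_left: "tmult (vsc c u) v = vsc c (tmult u v)"
  by (simp add: tmult_def bil_def lin_vsc)

lemma tmult_vsc_right: "tmult u (vsc c v) = vsc c (tmult u v)"
  by (simp add: tmult_def bil_def lin_vsc lin_vsc_fun)

lemma tmult_lin_left:
  assumes "fsupp u" "\<And>p. u p \<noteq> 0 \<Longrightarrow> fsupp (f p)"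
  shows "tmult (lin f u) v = lin (\<lambda>p. tmult (f p) v) u"
  unfolding tmult_def bil_def by (rule lin_lin[OF assms])

lemma tmult_lin_right:
  assumes "fsupp u" "fsupp v" "\<And>q. v q \<noteq> 0 \<Longrightarrow> fsupp (g q)"
  shows "tmult u (lin g v) = lin (\<lambda>q. tmult u (g q)) v"
proof -
  have "tmult u (lin g v) = lin (\<lambda>s. lin (\<lambda>q. lin (\<lambda>w'. e (s @ w')) (g q)) v) u"
    unfolding tmult_def bil_def
    by (rule lin_cong) (rule lin_lin[OF assms(2,3)])
  also have "\<dots> = lin (\<lambda>q. lin (\<lambda>s. lin (\<lambda>w'. e (s @ w')) (g q)) u) v"
    by (rule lin_swap[OF assms(1,2)])
  also have "\<dots> = lin (\<lambda>q. tmult u (g q)) v"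
    by (simp add: tmult_def bil_def)
  finally show ?thesis .
qed

lemma tmult_vadd_left: "fsupp u \<Longrightarrow> fsupp u' \<Longrightarrow> tmult (vadd u u') v = vadd (tmult u v) (tmult u' v)"
  by (simp add: tmult_def bil_def lin_vadd)

lemma tmult_vadd_right: "fsupp v \<Longrightarrow> fsupp v' \<Longrightarrow> tmult u (vadd v v') = vadd (tmult u v) (tmult u v')"
  by (simp add: tmult_def bil_def lin_vadd lin_vadd_fun)

lemma vmap_e[simp]: "vmap f (e p) = (e (f p) :: _ \<Rightarrow> 'k::field)"
  by (simp add: vmap_def)

lemma fsupp_vmap[simp]: "fsupp u \<Longrightarrow> fsupp (vmap f u)"
  by (simp add: vmap_def)

lemma vmap_vsc: "vmap f (vsc c u) = vsc c (vmap f u)"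
  by (simp add: vmap_def lin_vsc)

lemma vmap_lin:
  assumes "fsupp u" "\<And>p. u p \<noteq> 0 \<Longrightarrow> fsupp (g p)"
  shows "vmap f (lin g u) = lin (\<lambda>p. vmap f (g p)) u"
  unfolding vmap_def by (rule lin_lin[OF assms])

lemma lin_vmap:
  assumes "fsupp u"
  shows "lin g (vmap f u) = lin (\<lambda>p. g (f p)) u"
  unfolding vmap_def by (subst lin_lin) (use assms in auto)

lemma vsc_one[simp]: "vsc 1 u = u" by (simp add: vsc_def)
lemma vsc_vsc[simp]: "vsc a (vsc b u) = vsc (a * b) u" by (simp add: vsc_def mult.assoc)

lemma lin_vsc_fun_pair: "lin (\<lambda>(x, y). vsc c (f x y)) u = vsc c (lin (\<lambda>(x, y). f x y) u)"
  using lin_vsc_fun[of c "\<lambda>p. f (fst p) (snd p)" u] by (simp add: split_def)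

lemma tmult_lin_lin:
  assumes "fsupp u" "fsupp v" "\<And>p. fsupp (f p)" "\<And>q. fsupp (g q)"
  shows "tmult (lin f u) (lin g v) = lin (\<lambda>(p, q). tmult (f p) (g q)) (tens u v)"
proof -
  have "tmult (lin f u) (lin g v) = lin (\<lambda>p. tmult (f p) (lin g v)) u"
    by (rule tmult_lin_left) (use assms in auto)
  also have "\<dots> = lin (\<lambda>p. lin (\<lambda>q. tmult (f p) (g q)) v) u"
    by (rule lin_cong, rule tmult_lin_right) (use assms in auto)
  also have "\<dots> = lin (\<lambda>(p, q). tmult (f p) (g q)) (tens u v)"
    by (subst lin_tens) (use assms in auto)
  finally show ?thesis .
qed

lemma vsc_eq_iff: "c \<noteq> 0 \<Longrightarrow> vsc c u = v \<longleftrightarrow> u = vsc (1 / c) v"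
  by (auto simp: vsc_def fun_eq_iff field_simps)

lemma vsub_self: "vsub u u = vzero" by (simp add: vsub_def vzero_def)

lemma vmap_vmap: "vmap f (vmap g u) = vmap (\<lambda>x. f (g x)) u"
proof (cases "fsupp u")
  case True
  then show ?thesis unfolding vmap_def[of f] by (subst lin_vmap) (auto simp: vmap_def)
next
  case False
  then have "vmap g u = (\<lambda>q. 0)" "vmap (\<lambda>x. f (g x)) u = (\<lambda>q. 0)"
    by (simp_all add: vmap_def lin_def fsupp_def)
  then show ?thesis by (simp add: vmap_def)
qed

lemma vmap_map_snd_tens:
  assumes "fsupp X" "fsupp Y"
  shows "vmap (\<lambda>(g, x). (g, f x)) (tens X Y) = tens X (vmap f Y)"
proof -
  have "vmap (\<lambda>(g, x). (g, f x)) (tens X Y) = lin (\<lambda>p. lin (\<lambda>q. e (p, f q)) Y) X"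
    unfolding vmap_def by (subst lin_tens) (use assms in auto)
  also have "\<dots> = tens (lin e X) (lin (\<lambda>q. e (f q)) Y)"
    by (subst tens_lin) (use assms in auto)
  finally show ?thesis using assms by (simp add: lin_id vmap_def)
qed

lemma vmap_lin_pair:
  assumes "fsupp u" "\<And>a b. fsupp (g a b)"
  shows "vmap f (lin (\<lambda>(a, b). g a b) u) = lin (\<lambda>(a, b). vmap f (g a b)) u"
  unfolding vmap_def by (rule lin_lin_pair) (use assms in auto)

lemma vzero_fun: "vzero = (\<lambda>p. 0)" by (simp add: vzero_def)

lemma lspan_zero: "(\<lambda>p. 0) \<in> lspan S"
  unfolding lspan_def by (rule CollectI, rule exI[of _ "{}"]) auto

lemma lspan_add:
  assumes "u \<in> lspan S" "v \<in> lspan S"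
  shows "vadd u v \<in> lspan S"
proof -
  obtain F1 c1 where F1: "finite F1" "F1 \<subseteq> S" "u = (\<lambda>p. \<Sum>s\<in>F1. c1 s * s p)"
    using assms(1) unfolding lspan_def by blast
  obtain F2 c2 where F2: "finite F2" "F2 \<subseteq> S" "v = (\<lambda>p. \<Sum>s\<in>F2. c2 s * s p)"
    using assms(2) unfolding lspan_def by blast
  define c where "c s = (if s \<in> F1 then c1 s else 0) + (if s \<in> F2 then c2 s else 0)" for s
  have "vadd u v = (\<lambda>p. \<Sum>s\<in>F1 \<union> F2. c s * s p)"
  proof
    fix p
    have "c s * s p = (if s \<in> F1 then c1 s * s p else 0) + (if s \<in> F2 then c2 s * s p else 0)" for s
      by (simp add: c_def distrib_right)
    then have "(\<Sum>s\<in>F1 \<union> F2. c s * s p) = (\<Sum>s\<in>F1 \<union> F2. (if s \<in> F1 then c1 s * s p else 0)) + (\<Sum>s\<in>F1 \<union> F2. (if s \<in> F2 then c2 s * s p else 0))"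
      by (simp add: sum.distrib)
    also have "\<dots> = (\<Sum>s\<in>F1. c1 s * s p) + (\<Sum>s\<in>F2. c2 s * s p)"
    proof -
      have "(\<Sum>s\<in>F1 \<union> F2. (if s \<in> F1 then c1 s * s p else 0)) = (\<Sum>s\<in>F1. c1 s * s p)"
        by (rule sum.mono_neutral_cong_right) (use F1 F2 in auto)
      moreover have "(\<Sum>s\<in>F1 \<union> F2. (if s \<in> F2 then c2 s * s p else 0)) = (\<Sum>s\<in>F2. c2 s * s p)"
        by (rule sum.mono_neutral_cong_right) (use F1 F2 in auto)
      ultimately show ?thesis by simp
    qed
    finally show "vadd u v p = (\<Sum>s\<in>F1 \<union> F2. c s * s p)" using F1(3) F2(3) by (simp add: vadd_def)
  qed
  then show ?thesis unfolding lspan_def using F1 F2 by blast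
qed

lemma lspan_mono: "S \<subseteq> T \<Longrightarrow> lspan S \<subseteq> lspan T"
  unfolding lspan_def by blast

lemma lin_sum_combination:
  assumes "finite F" "\<And>s. s \<in> F \<Longrightarrow> fsupp s"
  shows "lin f (\<lambda>p. \<Sum>s\<in>F. c s * s p) = (\<lambda>q. \<Sum>s\<in>F. c s * lin f s q)"
  using assms
proof (induction F rule: finite_induct)
  case empty
  then show ?case by simp
next
  case (insert x F)
  have fF: "fsupp (\<lambda>p. \<Sum>s\<in>F. c s * s p)"
  proof -
    have "{p. (\<Sum>s\<in>F. c s * s p) \<noteq> 0} \<subseteq> (\<Union>s\<in>F. {p. s p \<noteq> 0})"
    proof
      fix p assume "p \<in> {p. (\<Sum>s\<in>F. c s * s p) \<noteq> 0}"
      then have "(\<Sum>s\<in>F. c s * s p) \<noteq> 0" by simp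
      then obtain s where "s \<in> F" "c s * s p \<noteq> 0" by (meson sum.neutral)
      then show "p \<in> (\<Union>s\<in>F. {p. s p \<noteq> 0})" by auto
    qed
    moreover have "finite (\<Union>s\<in>F. {p. s p \<noteq> 0})" using insert by (auto simp: fsupp_def)
    ultimately show ?thesis unfolding fsupp_def by (rule finite_subset)
  qed
  have "(\<lambda>p. \<Sum>s\<in>insert x F. c s * s p) = vadd (vsc (c x) x) (\<lambda>p. \<Sum>s\<in>F. c s * s p)"
    using insert by (simp add: vadd_def vsc_def)
  then have "lin f (\<lambda>p. \<Sum>s\<in>insert x F. c s * s p) = vadd (vsc (c x) (lin f x)) (lin f (\<lambda>p. \<Sum>s\<in>F. c s * s p))"
    using insert fF by (simp add: lin_vadd lin_vsc)
  then show ?case using insert by (simp add: vadd_def vsc_def)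
qed

lemma lspan_image:
  assumes "\<And>s. s \<in> S \<Longrightarrow> fsupp s" "\<And>s. s \<in> S \<Longrightarrow> lin f s \<in> S'" "v \<in> lspan S"
  shows "lin f v \<in> lspan S'"
proof -
  obtain F c where F: "finite F" "F \<subseteq> S" "v = (\<lambda>p. \<Sum>s\<in>F. c s * s p)"
    using assms(3) unfolding lspan_def by blast
  have "lin f v = (\<lambda>q. \<Sum>s\<in>F. c s * lin f s q)"
    unfolding F(3) by (rule lin_sum_combination) (use F assms(1) in auto)
  also have "\<dots> = (\<lambda>q. \<Sum>s'\<in>(lin f) ` F. (\<Sum>s\<in>{s\<in>F. lin f s = s'}. c s) * s' q)"
  proof
    fix q
    have "(\<Sum>s\<in>F. c s * lin f s q) = (\<Sum>s'\<in>(lin f) ` F. \<Sum>s\<in>{s\<in>F. lin f s = s'}. c s * lin f s q)"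
      by (rule sum.image_gen[OF F(1)])
    also have "\<dots> = (\<Sum>s'\<in>(lin f) ` F. (\<Sum>s\<in>{s\<in>F. lin f s = s'}. c s) * s' q)"
      by (rule sum.cong) (auto simp: sum_distrib_right)
    finally show "(\<Sum>s\<in>F. c s * lin f s q) = \<dots>" .
  qed
  finally have eq: "lin f v = (\<lambda>q. \<Sum>s'\<in>(lin f) ` F. (\<Sum>s\<in>{s\<in>F. lin f s = s'}. c s) * s' q)" .
  have "finite ((lin f) ` F)" "(lin f) ` F \<subseteq> S'" using F assms(2) by auto
  then show ?thesis unfolding lspan_def
    by (intro CollectI exI[of _ "(lin f) ` F"] exI[of _ "\<lambda>s'. \<Sum>s\<in>{s\<in>F. lin f s = s'}. c s"] conjI eq)
qed

lemma supp_subset_fst_times: "{p. u p \<noteq> 0} \<subseteq> (fst ` {p. u p \<noteq> 0}) \<times> UNIV"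
proof
  fix p assume "p \<in> {p. u p \<noteq> 0}"
  then have "fst p \<in> fst ` {p. u p \<noteq> 0}" by (rule imageI)
  then show "p \<in> (fst ` {p. u p \<noteq> 0}) \<times> UNIV" by (simp add: mem_Times_iff)
qed

lemma supp_slice_subset_fst: "{w. u (w, h) \<noteq> 0} \<subseteq> fst ` {p. u p \<noteq> 0}"
proof
  fix w assume "w \<in> {w. u (w, h) \<noteq> 0}"
  then have "(w, h) \<in> {p. u p \<noteq> 0}" by simp
  then have "fst (w, h) \<in> fst ` {p. u p \<noteq> 0}" by (rule imageI)
  then show "w \<in> fst ` {p. u p \<noteq> 0}" by simp
qed

lemma fsupp_slice: "fsupp u \<Longrightarrow> fsupp (\<lambda>w. u (w, h))"
  unfolding fsupp_def by (rule finite_subset[of _ "fst ` {p. u p \<noteq> 0}"]) (auto simp: image_iff)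

section \<open>The Hopf algebra H8 and its involutions\<close>

lemma sum_UNIV_prod: "(\<Sum>x\<in>(UNIV::('a::finite \<times> 'b::finite) set). f x) = (\<Sum>a\<in>UNIV. \<Sum>b\<in>UNIV. f (a, b))"
  unfolding UNIV_Times_UNIV[symmetric] sum.cartesian_product by simp

lemma sum_UNIV_bool: "(\<Sum>x\<in>(UNIV::bool set). f x) = f False + f True"
  by (simp add: UNIV_bool)

lemma sum_UNIV_hb: "(\<Sum>x\<in>(UNIV::hb set). f x) =
  f (False,False,False) + f (False,False,True) + f (False,True,False) + f (False,True,True) +
  f (True,False,False) + f (True,False,True) + f (True,True,False) + f (True,True,True)"
  by (simp add: sum_UNIV_prod sum_UNIV_bool add_ac)

text \<open>Closed forms of the structure constants of H8 and of the matrix of \<open>\<tau>\<^sub>3\<close> in the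
  basis \<open>x\<^sup>a y\<^sup>b z\<^sup>c\<close>; every identity between them is then a finite case analysis.\<close>

definition h8m_coeff :: "hb \<Rightarrow> hb \<Rightarrow> hb \<Rightarrow> 'k::field" where
  "h8m_coeff p q r = (case p of (a, b, c) \<Rightarrow> case q of (a2, b2, c2) \<Rightarrow> case r of (r1, r2, r3) \<Rightarrow>
     if \<not> c then (if r = (a \<noteq> a2, b \<noteq> b2, c2) then 1 else 0)
     else if \<not> c2 then (if r = (a \<noteq> b2, b \<noteq> a2, True) then 1 else 0)
     else if r3 then 0 else if r1 \<noteq> (a \<noteq> b2) \<and> r2 \<noteq> (b \<noteq> a2) then -1/2 else 1/2)"

definition h8comult_coeff :: "hb \<Rightarrow> hb \<times> hb \<Rightarrow> 'k::field" where
  "h8comult_coeff p PQ = (case p of (a, b, c) \<Rightarrow> case PQ of ((a1, b1, c1), (a2, b2, c2)) \<Rightarrow>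
     if \<not> c then (if (a1, b1, c1) = (a, b, False) \<and> (a2, b2, c2) = (a, b, False) then 1 else 0)
     else if c1 \<and> c2 \<and> a1 = a \<and> b2 = b then (if b1 \<noteq> b \<and> a2 \<noteq> a then -1/2 else 1/2) else 0)"

definition tau3_coeff :: "hb \<Rightarrow> hb \<Rightarrow> 'k::field" where
  "tau3_coeff p q = (case p of (a, b, c) \<Rightarrow> case q of (a2, b2, c2) \<Rightarrow>
     if c2 \<noteq> c then 0 else if c then (if a2 \<noteq> b \<and> b2 \<noteq> a then -1/2 else 1/2)
     else (if a2 = b \<and> b2 = a then 1 else 0))"

lemma h8m_eq_coeff: "h8m = (h8m_coeff :: _ \<Rightarrow> _ \<Rightarrow> _ \<Rightarrow> 'k::field)"
proof (intro ext)
  fix p q r :: hb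
  obtain a b c a2 b2 c2 r1 r2 r3 where "p = (a, b, c)" "q = (a2, b2, c2)" "r = (r1, r2, r3)"
    by (metis prod_cases3)
  then show "h8m p q r = (h8m_coeff p q r :: 'k)"
    by (cases a; cases b; cases c; cases a2; cases b2; cases c2; cases r1; cases r2; cases r3;
        simp add: h8m_def h8m_coeff_def e_def vsc_def Let_def)
qed

lemma dz_expand: "(dz :: _ \<Rightarrow> 'k::field) = vsc (1/2) (vsub (vadd (vadd (e (hz,hz)) (e (hz,(True,False,True))))
     (e ((False,True,True),hz))) (e ((False,True,True),(True,False,True))))"
proof -
  have four: "(\<lambda>r. e a r + e b r + e c r - e d r) = vsub (vadd (vadd (e a) (e b)) (e c)) (e d)"
    for a b c d :: "hb \<times> hb"
    by (simp add: vsub_def vadd_def)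
  show ?thesis
    unfolding dz_def h8tmult_def four bil_def
    by (simp add: lin_vsc lin_vadd lin_vsub h8m_def h1_def hx_def hy_def hz_def Let_def)
qed

lemma h8comult_eq_coeff: "h8comult = (h8comult_coeff :: _ \<Rightarrow> _ \<Rightarrow> 'k::field)"
proof (intro ext)
  fix p :: hb and PQ :: "hb \<times> hb"
  obtain a b c a1 b1 c1 a2 b2 c2 where "p = (a, b, c)" "PQ = ((a1, b1, c1), (a2, b2, c2))"
    by (metis prod_cases3 prod.exhaust)
  then show "h8comult p PQ = (h8comult_coeff p PQ :: 'k)"
    apply (cases a; cases b; cases c)
    apply (simp_all add: h8comult_def h8tmult_def dz_expand lin_vsc lin_vadd lin_vsub h8m_def
        h1_def hx_def hy_def hz_def Let_def)
    apply (cases a1; cases b1; cases c1; cases a2; cases b2; cases c2;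
        simp add: h8comult_coeff_def e_def vsc_def vadd_def vsub_def)+
    done
qed

lemma tau3b_eq_coeff: "tau3b = (tau3_coeff :: _ \<Rightarrow> _ \<Rightarrow> 'k::field_char_0)"
proof (intro ext)
  fix p q :: hb
  obtain a b c a2 b2 c2 where "p = (a, b, c)" "q = (a2, b2, c2)" by (metis prod_cases3)
  then show "tau3b p q = (tau3_coeff p q :: 'k)"
    by (cases a; cases b; cases c; cases a2; cases b2; cases c2;
        simp add: tau3b_def tau3_coeff_def h8mult_def bil_def lin_finite sum_UNIV_hb h8m_def e_def
          vsc_def tau3z_def hx_def hy_def h1_def Let_def)
qed

text \<open>\<open>psi p q\<close> is the coefficient of the basis element \<open>q\<close> in the image of \<open>p\<close>.\<close>

locale h8_involution =
  fixes psi :: "hb \<Rightarrow> hb \<Rightarrow> 'k::field"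
  assumes psi_invol: "lin psi (psi p) = e p"
    and psi_mult: "lin psi (h8m p q) = h8mult (psi p) (psi q)"
    and psi_comult: "lin (\<lambda>(p, q). tens (psi p) (psi q)) (h8comult r) = lin h8comult (psi r)"
    and psi_counit: "(\<Sum>q\<in>UNIV. psi p q) = 1"
    and psi_unit: "psi h1 = e h1"
begin

lemma lin_psi_psi: "lin psi (lin psi u) = u"
proof -
  have "lin psi (lin psi u) = lin (\<lambda>p. lin psi (psi p)) u"
    by (rule lin_lin) auto
  then show ?thesis by (simp add: psi_invol lin_id)
qed

lemma inv_lin_psi: "inv (lin psi) = lin psi"
  by (rule inv_unique_comp) (auto simp: fun_eq_iff lin_psi_psi)

end

lemma h8_involution_tau3b: "h8_involution (tau3b :: hb \<Rightarrow> hb \<Rightarrow> 'k::field_char_0)"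
proof
  fix p q r :: hb
  obtain a b c a2 b2 c2 r1 r2 r3 where
    pqr: "p = (a, b, c)" "q = (a2, b2, c2)" "r = (r1, r2, r3)" by (metis prod_cases3)
  show "lin tau3b (tau3b p) = (e p :: hb \<Rightarrow> 'k)"
  proof
    fix s :: hb
    obtain s1 s2 s3 where "s = (s1, s2, s3)" by (metis prod_cases3)
    then show "lin tau3b (tau3b p) s = (e p s :: 'k)"
      unfolding pqr lin_finite tau3b_eq_coeff
      by (cases a; cases b; cases c; cases s1; cases s2; cases s3;
          simp add: sum_UNIV_hb tau3_coeff_def e_def)
  qed
  show "lin tau3b (h8m p q) = (h8mult (tau3b p) (tau3b q) :: hb \<Rightarrow> 'k)"
  proof
    fix s :: hb
    obtain s1 s2 s3 where "s = (s1, s2, s3)" by (metis prod_cases3)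
    then show "lin tau3b (h8m p q) s = (h8mult (tau3b p) (tau3b q) s :: 'k)"
      unfolding pqr h8mult_def bil_def lin_finite h8m_eq_coeff tau3b_eq_coeff
      by (cases a; cases b; cases c; cases a2; cases b2; cases c2; cases s1; cases s2; cases s3;
          simp add: sum_UNIV_hb h8m_coeff_def tau3_coeff_def)
  qed
  show "lin (\<lambda>(p, q). tens (tau3b p) (tau3b q)) (h8comult r) = (lin h8comult (tau3b r) :: _ \<Rightarrow> 'k)"
  proof
    fix s :: "hb \<times> hb"
    obtain a1 b1 c1 a2 b2 c2 where "s = ((a1, b1, c1), (a2, b2, c2))"
      by (metis prod_cases3 prod.exhaust)
    then show "lin (\<lambda>(p, q). tens (tau3b p) (tau3b q)) (h8comult r) s = (lin h8comult (tau3b r) s :: 'k)"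
      unfolding pqr lin_finite h8comult_eq_coeff tau3b_eq_coeff
      by (cases r1; cases r2; cases r3; cases a1; cases b1; cases c1; cases a2; cases b2; cases c2;
          simp add: sum_UNIV_prod sum_UNIV_bool h8comult_coeff_def tau3_coeff_def tens_def)
  qed
  show "(\<Sum>q\<in>UNIV. tau3b p q) = (1 :: 'k)"
    unfolding pqr tau3b_eq_coeff
    by (cases a; cases b; cases c; simp add: sum_UNIV_hb tau3_coeff_def)
  show "tau3b h1 = (e h1 :: hb \<Rightarrow> 'k)"
    unfolding tau3b_eq_coeff by (auto simp: tau3_coeff_def e_def h1_def fun_eq_iff)
qed

lemma tau3b_hx: "tau3b hx = (e hy :: _ \<Rightarrow> 'k::field_char_0)"
  unfolding tau3b_eq_coeff by (auto simp: tau3_coeff_def e_def hx_def hy_def fun_eq_iff)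

lemma tau3b_hy: "tau3b hy = (e hx :: _ \<Rightarrow> 'k::field_char_0)"
  unfolding tau3b_eq_coeff by (auto simp: tau3_coeff_def e_def hx_def hy_def fun_eq_iff)

lemma tau3b_hxy: "tau3b hxy = (e hxy :: _ \<Rightarrow> 'k::field_char_0)"
  unfolding tau3b_eq_coeff by (auto simp: tau3_coeff_def e_def hxy_def fun_eq_iff)

section \<open>Monomial isomorphisms of twisted Yetter-Drinfeld modules\<close>

lemma fsupp_actT:
  assumes "\<And>h b. fsupp (yact X h b)"
  shows "fsupp (actT X h w)"
proof (induction w arbitrary: h)
  case Nil then show ?case by simp
next
  case (Cons b w)
  show ?case by (simp add: split_def Cons assms)
qed

lemma fsupp_coactT:
  assumes "\<And>b. fsupp (ycoact X b)"
  shows "fsupp (coactT X w)"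
proof (induction w)
  case Nil then show ?case by simp
next
  case (Cons b w)
  show ?case by (simp add: split_def Cons assms)
qed

lemma fsupp_comultT:
  assumes "\<And>h b. fsupp (yact X h b)" "\<And>b. fsupp (ycoact X b)"
  shows "fsupp (comultT X w)"
proof (induction w)
  case Nil then show ?case by simp
next
  case (Cons b w)
  show ?case by (simp add: split_def Cons assms fsupp_actT)
qed

lemma tens3_lin:
  fixes u v :: "hb \<Rightarrow> 'k::field"
  shows "lin (\<lambda>(k1, k2). tens (tens E (Y k1)) (e (x, k2))) (tens u v) = tens (tens E (lin Y u)) (tens (e x) v)"
proof -
  have "lin (\<lambda>(k1, k2). tens (tens E (Y k1)) (e (x, k2))) (tens u v) = lin (\<lambda>k1. lin (\<lambda>k2. tens (tens E (Y k1)) (e (x, k2))) v) u"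
    by (subst lin_tens) auto
  also have "\<dots> = lin (\<lambda>k2. lin (\<lambda>k1. tens (tens E (Y k1)) (e (x, k2))) u) v"
    by (rule lin_swap) auto
  also have "\<dots> = lin (\<lambda>k2. tens (tens E (lin Y u)) (e (x, k2))) v"
    by (simp add: tens_lin_left tens_lin_right)
  also have "\<dots> = tens (tens E (lin Y u)) (lin (\<lambda>k2. e (x, k2)) v)"
    by (simp add: tens_lin_right)
  also have "lin (\<lambda>k2. e (x, k2)) v = tens (e x) v"
  proof -
    have "tens (e x) v = tens (e x) (lin e v)" by (simp add: lin_id)
    also have "\<dots> = lin (\<lambda>k. tens (e x) (e k)) v" by (rule tens_lin_right)
    finally show ?thesis by simp
  qed
  finally show ?thesis .
qed

lemma h8mult_swap: "h8mult u v = lin (\<lambda>k1. lin (\<lambda>g. h8m g k1) u) (v :: hb \<Rightarrow> 'k::field)"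
  unfolding h8mult_def bil_def by (rule lin_swap) auto

context h8_involution
begin

lemma lin_psi_h8comult_mult:
  "lin (\<lambda>k. lin (\<lambda>g. lin (\<lambda>(k1, k2). tens (tens E (h8m g k1)) (e (a, k2))) (h8comult k)) (psi g0)) (psi h)
   = lin (\<lambda>(h1, h2). tens (tens E (h8mult (psi g0) (psi h1))) (tens (e a) (psi h2))) (h8comult h)"
proof -
  define S where "S = (\<lambda>(k1 :: hb, k2 :: hb). tens (tens E (lin (\<lambda>g. h8m g k1) (psi g0))) (e (a, k2)))"
  have "lin (\<lambda>g. lin (\<lambda>(k1, k2). tens (tens E (h8m g k1)) (e (a, k2))) (h8comult k)) (psi g0)
      = lin S (h8comult k)" for k
  proof -
    have "lin (\<lambda>g. lin (\<lambda>(k1, k2). tens (tens E (h8m g k1)) (e (a, k2))) (h8comult k)) (psi g0)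
        = lin (\<lambda>p. lin (\<lambda>g. tens (tens E (h8m g (fst p))) (e (a, snd p))) (psi g0)) (h8comult k)"
      unfolding split_def by (rule lin_swap) auto
    also have "\<dots> = lin S (h8comult k)"
      unfolding S_def split_def by (simp add: tens_lin_left tens_lin_right)
    finally show ?thesis .
  qed
  then have "lin (\<lambda>k. lin (\<lambda>g. lin (\<lambda>(k1, k2). tens (tens E (h8m g k1)) (e (a, k2))) (h8comult k)) (psi g0)) (psi h)
      = lin S (lin (\<lambda>(h1, h2). tens (psi h1) (psi h2)) (h8comult h))"
    by (simp add: psi_comult lin_lin)
  also have "\<dots> = lin (\<lambda>(h1, h2). lin S (tens (psi h1) (psi h2))) (h8comult h)"
    by (rule lin_lin_pair) auto
  also have "\<dots> = lin (\<lambda>(h1, h2). tens (tens E (h8mult (psi g0) (psi h1))) (tens (e a) (psi h2))) (h8comult h)"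
    by (rule lin_cong, clarify) (simp add: S_def tens3_lin h8mult_swap)
  finally show ?thesis .
qed

end

text \<open>The monomial map \<open>phi b = c b \<cdot> \<sigma> b\<close> is an isomorphism \<open>V\<^sup>\<psi> \<cong> W\<close>: the two intertwining
  assumptions say \<open>h \<cdot> phi v = phi (\<psi> h \<cdot> v)\<close> and \<open>\<rho>\<^sub>W \<circ> phi = (\<psi> \<otimes> phi) \<circ> \<rho>\<^sub>V\<close>, written
  out on basis vectors (recall \<open>\<psi>\<^sup>-\<^sup>1 = \<psi>\<close>).\<close>

locale monomial_twist_iso = h8_involution psi
  for psi :: "hb \<Rightarrow> hb \<Rightarrow> 'k::field" +
  fixes V W :: "('k, 'b) ydm" and \<sigma> :: "'b \<Rightarrow> 'b" and c :: "'b \<Rightarrow> 'k"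
  assumes bij_sigma: "bij \<sigma>"
    and c_nonzero: "\<And>b. c b \<noteq> 0"
    and sigma_ybas: "\<sigma> ` ybas V = ybas W"
    and fsupp_yact_V: "\<And>h b. fsupp (yact V h b)" and fsupp_ycoact_V: "\<And>b. fsupp (ycoact V b)"
    and fsupp_yact_W: "\<And>h b. fsupp (yact W h b)" and fsupp_ycoact_W: "\<And>b. fsupp (ycoact W b)"
    and yact_intertwine: "\<And>h b. vsc (c b) (yact W h (\<sigma> b)) =
                lin (\<lambda>g. lin (\<lambda>d. vsc (c d) (e (\<sigma> d))) (yact V g b)) (psi h)"
    and ycoact_intertwine: "\<And>b. vsc (c b) (ycoact W (\<sigma> b)) =
                lin (\<lambda>(g, d). tens (psi g) (vsc (c d) (e (\<sigma> d)))) (ycoact V b)"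
begin

definition coef_word :: "'b list \<Rightarrow> 'k" where "coef_word w = prod_list (map c w)"
definition phi :: "'b \<Rightarrow> 'b \<Rightarrow> 'k" where "phi b = vsc (c b) (e (\<sigma> b))"
definition phi_word :: "'b list \<Rightarrow> 'b list \<Rightarrow> 'k" where "phi_word w = vsc (coef_word w) (e (map \<sigma> w))"
definition phiT :: "('b list \<Rightarrow> 'k) \<Rightarrow> 'b list \<Rightarrow> 'k" where "phiT u = lin phi_word u"

abbreviation phiT2 :: "('b list \<times> 'b list \<Rightarrow> 'k) \<Rightarrow> 'b list \<times> 'b list \<Rightarrow> 'k" where
  "phiT2 \<equiv> lin (\<lambda>(a, d). tens (phi_word a) (phi_word d))"

abbreviation psi_phiT :: "(hb \<times> 'b list \<Rightarrow> 'k) \<Rightarrow> hb \<times> 'b list \<Rightarrow> 'k" where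
  "psi_phiT \<equiv> lin (\<lambda>(g, a). tens (psi g) (phi_word a))"

lemma fsupp_phi[simp]: "fsupp (phi b)" by (simp add: phi_def)
lemma fsupp_phi_word[simp]: "fsupp (phi_word w)" by (simp add: phi_word_def)
lemma fsupp_phiT[simp]: "fsupp u \<Longrightarrow> fsupp (phiT u)" by (simp add: phiT_def)

lemma fsupp_V_structure[simp]: "fsupp (yact V h b)" "fsupp (ycoact V b)" "fsupp (actT V h w)"
   "fsupp (coactT V w)" "fsupp (comultT V w)"
  by (simp_all add: fsupp_yact_V fsupp_ycoact_V fsupp_actT fsupp_coactT fsupp_comultT)
lemma fsupp_W_structure[simp]: "fsupp (yact W h b)" "fsupp (ycoact W b)" "fsupp (actT W h w)"
   "fsupp (coactT W w)" "fsupp (comultT W w)"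
  by (simp_all add: fsupp_yact_W fsupp_ycoact_W fsupp_actT fsupp_coactT fsupp_comultT)

lemma coef_word_simps[simp]: "coef_word [] = 1" "coef_word (b # w) = c b * coef_word w" "coef_word (u @ v) = coef_word u * coef_word v"
  by (simp_all add: coef_word_def)

definition phi_inv :: "'b \<Rightarrow> 'b \<Rightarrow> 'k" where
  "phi_inv b' = vsc (1 / c (inv \<sigma> b')) (e (inv \<sigma> b'))"

lemma inv_sigma_sigma[simp]: "inv \<sigma> (\<sigma> b) = b"
  using bij_sigma by (simp add: bij_is_inj)

lemma sigma_inv_sigma[simp]: "\<sigma> (inv \<sigma> b) = b"
  using bij_sigma by (simp add: bij_is_surj surj_f_inv_f)

lemma fsupp_phi_inv[simp]: "fsupp (phi_inv b)" by (simp add: phi_inv_def)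

lemma phi_inv_phi: "lin phi_inv (phi b) = e b"
  using c_nonzero by (simp add: phi_def phi_inv_def lin_vsc)

lemma phi_phi_inv: "lin phi (phi_inv b) = e b"
  using c_nonzero by (simp add: phi_def phi_inv_def lin_vsc)

lemma lin_phi_inv_phi: "fsupp u \<Longrightarrow> lin phi_inv (lin phi u) = u"
  by (simp add: lin_lin phi_inv_phi lin_id)

lemma lin_phi_phi_inv: "fsupp u \<Longrightarrow> lin phi (lin phi_inv u) = u"
  by (simp add: lin_lin phi_phi_inv lin_id)

lemma lin_psi_phi_inv_psi_phi:
  assumes "fsupp X"
  shows "lin (\<lambda>(g, d). tens (psi g) (phi_inv d)) (lin (\<lambda>(g, d). tens (psi g) (phi d)) X) = X"
proof -
  have "lin (\<lambda>(g, d). tens (psi g) (phi_inv d)) (tens (psi g) (phi d)) = e (g, d)" for g d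
    by (simp add: lin_tens tens_lin[symmetric] psi_invol phi_inv_phi)
  then show ?thesis
    using assms by (simp add: lin_lin_pair lin_id)
qed

lemma monomial_twist_iso_inverse: "monomial_twist_iso psi W V (inv \<sigma>) (\<lambda>b'. 1 / c (inv \<sigma> b'))"
proof (intro monomial_twist_iso.intro h8_involution_axioms monomial_twist_iso_axioms.intro)
  show "bij (inv \<sigma>)" using bij_sigma by (rule bij_imp_bij_inv)
  show "inv \<sigma> ` ybas W = ybas V"
    by (metis sigma_ybas bij_sigma bij_is_inj image_inv_f_f)
next
  fix h b'
  define b where "b = inv \<sigma> b'"
  have b': "b' = \<sigma> b" by (simp add: b_def)
  have "yact W g b' = vsc (1 / c b) (lin (\<lambda>k. lin phi (yact V k b)) (psi g))" for g
    using yact_intertwine[of b g] c_nonzero[of b] by (simp add: b' phi_def[abs_def] vsc_eq_iff)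
  then have "lin phi_inv (yact W g b') = vsc (1 / c b) (lin (\<lambda>k. yact V k b) (psi g))" for g
    by (simp add: lin_vsc lin_lin phi_inv_phi lin_id)
  then show "vsc (1 / c (inv \<sigma> b')) (yact V h (inv \<sigma> b')) =
      lin (\<lambda>g. lin (\<lambda>d. vsc (1 / c (inv \<sigma> d)) (e (inv \<sigma> d))) (yact W g b')) (psi h)"
    by (simp add: phi_inv_def[symmetric] b_def[symmetric] lin_vsc_fun lin_lin[symmetric] psi_invol)
next
  fix b'
  define b where "b = inv \<sigma> b'"
  have b': "b' = \<sigma> b" by (simp add: b_def)
  have "ycoact W b' = vsc (1 / c b) (lin (\<lambda>(g, d). tens (psi g) (phi d)) (ycoact V b))"
    using ycoact_intertwine[of b] c_nonzero[of b] by (simp add: b' phi_def[abs_def] vsc_eq_iff)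
  then show "vsc (1 / c (inv \<sigma> b')) (ycoact V (inv \<sigma> b')) =
      lin (\<lambda>(g, d). tens (psi g) (vsc (1 / c (inv \<sigma> d)) (e (inv \<sigma> d)))) (ycoact W b')"
    by (simp add: phi_inv_def[symmetric] b_def[symmetric] lin_vsc lin_psi_phi_inv_psi_phi)
qed (simp_all add: c_nonzero fsupp_yact_V fsupp_ycoact_V fsupp_yact_W fsupp_ycoact_W)

lemma phi_word_Nil[simp]: "phi_word [] = e []" by (simp add: phi_word_def vsc_def)

lemma phi_word_append: "phi_word (u @ v) = tmult (phi_word u) (phi_word v)"
  by (simp add: phi_word_def tmult_vsc_left tmult_vsc_right mult.commute)

lemma phiT_e[simp]: "phiT (e w) = phi_word w" by (simp add: phiT_def)

lemma phiT_tmult: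
  assumes "fsupp u" "fsupp v"
  shows "phiT (tmult u v) = tmult (phiT u) (phiT v)"
proof -
  have "phiT (tmult u v) = lin (\<lambda>p. phiT (lin (\<lambda>q. e (p @ q)) v)) u"
    unfolding phiT_def tmult_def bil_def by (rule lin_lin) (use assms in auto)
  also have "\<dots> = lin (\<lambda>p. lin (\<lambda>q. phi_word (p @ q)) v) u"
    unfolding phiT_def by (rule lin_cong, subst lin_lin) (use assms in auto)
  also have "\<dots> = lin (\<lambda>p. tmult (phi_word p) (phiT v)) u"
    unfolding phiT_def phi_word_append by (rule lin_cong, rule tmult_lin_right[symmetric]) (use assms in auto)
  also have "\<dots> = tmult (phiT u) (phiT v)"
    unfolding phiT_def[of u] by (rule tmult_lin_left[symmetric]) (use assms in auto)
  finally show ?thesis .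
qed

lemma phiT_vmap_singleton:
  assumes "fsupp X"
  shows "phiT (vmap (\<lambda>x. [x]) X) = vmap (\<lambda>x. [x]) (lin phi X)"
proof -
  have "phiT (vmap (\<lambda>x. [x]) X) = lin (\<lambda>p. phi_word [p]) X"
    unfolding phiT_def by (rule lin_vmap[OF assms])
  also have "\<dots> = lin (\<lambda>p. vmap (\<lambda>x. [x]) (phi p)) X"
    by (simp add: phi_word_def phi_def vmap_vsc)
  also have "\<dots> = vmap (\<lambda>x. [x]) (lin phi X)"
    by (rule vmap_lin[symmetric]) (use assms in auto)
  finally show ?thesis .
qed

lemma phi_yact: "lin phi (yact V h b) = lin (\<lambda>k. vsc (c b) (yact W k (\<sigma> b))) (psi h)"
proof -
  have "lin (\<lambda>k. vsc (c b) (yact W k (\<sigma> b))) (psi h)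
      = lin (\<lambda>k. lin (\<lambda>g. lin phi (yact V g b)) (psi k)) (psi h)"
    by (simp add: yact_intertwine phi_def[abs_def])
  also have "\<dots> = lin (\<lambda>g. lin phi (yact V g b)) (lin psi (psi h))"
    by (rule lin_lin[symmetric]) auto
  also have "\<dots> = lin phi (yact V h b)" by (simp add: psi_invol)
  finally show ?thesis by simp
qed

lemma phiT_actT: "phiT (actT V g a) = lin (\<lambda>k. vsc (coef_word a) (actT W k (map \<sigma> a))) (psi g)"
proof (induction a arbitrary: g)
  case Nil
  have "phiT (actT V g []) = e []" by (simp add: h8counit_def vsc_def phiT_def[symmetric])
  moreover have "lin (\<lambda>k. vsc (coef_word []) (actT W k (map \<sigma> []))) (psi g) = e []"
    by (simp add: h8counit_def lin_const_finite psi_counit)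
  ultimately show ?case by simp
next
  case (Cons b a)
  define Y where "Y = (\<lambda>k. vsc (c b) (yact W k (\<sigma> b)))"
  define Z where "Z = (\<lambda>k. vsc (coef_word a) (actT W k (map \<sigma> a)))"
  define G where "G = (\<lambda>(k1, k2). tmult (vmap (\<lambda>x. [x]) (Y k1)) (Z k2))"
  have fY[simp]: "fsupp (Y k)" for k by (simp add: Y_def)
  have fZ[simp]: "fsupp (Z k)" for k by (simp add: Z_def)
  have "phiT (actT V g (b # a)) = phiT (lin (\<lambda>(h1, h2). tmult (vmap (\<lambda>x. [x]) (yact V h1 b)) (actT V h2 a)) (h8comult g))"
    by simp
  also have "\<dots> = lin (\<lambda>(h1, h2). phiT (tmult (vmap (\<lambda>x. [x]) (yact V h1 b)) (actT V h2 a))) (h8comult g)"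
    unfolding phiT_def by (rule lin_lin_pair) auto
  also have "\<dots> = lin (\<lambda>(h1, h2). tmult (vmap (\<lambda>x. [x]) (lin Y (psi h1))) (lin Z (psi h2))) (h8comult g)"
    by (simp add: phiT_tmult phiT_vmap_singleton phi_yact Cons Y_def Z_def)
  also have "\<dots> = lin (\<lambda>(h1, h2). lin G (tens (psi h1) (psi h2))) (h8comult g)"
  proof -
    have "tmult (vmap (\<lambda>x. [x]) (lin Y (psi h1))) (lin Z (psi h2)) = lin G (tens (psi h1) (psi h2))" for h1 h2
    proof -
      have "vmap (\<lambda>x. [x]) (lin Y (psi h1)) = lin (\<lambda>k. vmap (\<lambda>x. [x]) (Y k)) (psi h1)"
        by (rule vmap_lin) auto
      then show ?thesis unfolding G_def by (simp add: tmult_lin_lin)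
    qed
    then show ?thesis by simp
  qed
  also have "\<dots> = lin G (lin (\<lambda>(h1, h2). tens (psi h1) (psi h2)) (h8comult g))"
    by (rule lin_lin_pair[symmetric]) auto
  also have "\<dots> = lin G (lin h8comult (psi g))" by (simp add: psi_comult)
  also have "\<dots> = lin (\<lambda>k. lin G (h8comult k)) (psi g)" by (rule lin_lin) auto
  also have "\<dots> = lin (\<lambda>k. vsc (coef_word (b # a)) (actT W k (map \<sigma> (b # a)))) (psi g)"
  proof (rule lin_cong)
    fix k
    have "lin G (h8comult k) = lin (\<lambda>(k1, k2). vsc (c b * coef_word a) (tmult (vmap (\<lambda>x. [x]) (yact W k1 (\<sigma> b))) (actT W k2 (map \<sigma> a)))) (h8comult k)"
      unfolding G_def Y_def Z_def by (simp add: vmap_vsc tmult_vsc_left tmult_vsc_right mult.commute)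
    also have "\<dots> = vsc (coef_word (b # a)) (actT W k (map \<sigma> (b # a)))"
      by (simp add: lin_vsc_fun_pair)
    finally show "lin G (h8comult k) = vsc (coef_word (b # a)) (actT W k (map \<sigma> (b # a)))" .
  qed
  finally show ?case .
qed

lemma phi_ycoact: "vsc (c b) (ycoact W (\<sigma> b)) = lin (\<lambda>(g, d). tens (psi g) (phi d)) (ycoact V b)"
  by (simp add: ycoact_intertwine phi_def[abs_def])

lemma phiT2_tens:
  assumes "fsupp X" "fsupp Y"
  shows "lin (\<lambda>(a, d). tens (phi_word a) (phi_word d)) (tens X Y) = tens (phiT X) (phiT Y)"
proof -
  have "lin (\<lambda>(a, d). tens (phi_word a) (phi_word d)) (tens X Y) = lin (\<lambda>a. lin (\<lambda>d. tens (phi_word a) (phi_word d)) Y) X"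
    by (subst lin_tens) (use assms in auto)
  also have "\<dots> = tens (phiT X) (phiT Y)"
    unfolding phiT_def by (subst tens_lin) (use assms in auto)
  finally show ?thesis .
qed

lemma phiT2_vmap_Cons:
  assumes "fsupp X"
  shows "phiT2 (vmap (\<lambda>(a, d). (b # a, d)) X) = vsc (c b) (vmap (\<lambda>(a, d). (\<sigma> b # a, d)) (phiT2 X))"
proof -
  have "phiT2 (vmap (\<lambda>(a, d). (b # a, d)) X) = lin (\<lambda>(a, d). tens (phi_word (b # a)) (phi_word d)) X"
    using assms by (subst lin_vmap) (auto simp: split_def)
  also have "\<dots> = lin (\<lambda>(a, d). vsc (c b) (vmap (\<lambda>(a, d). (\<sigma> b # a, d)) (tens (phi_word a) (phi_word d)))) X"
    by (simp add: phi_word_def tens_vsc_left tens_vsc_right vmap_vsc mult_ac)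
  also have "\<dots> = vsc (c b) (vmap (\<lambda>(a, d). (\<sigma> b # a, d)) (phiT2 X))"
    unfolding lin_vsc_fun_pair using assms by (subst vmap_lin) (auto simp: split_def)
  finally show ?thesis .
qed

lemma phiT2_braiding:
  assumes X: "fsupp X"
  shows "phiT2 (lin (\<lambda>(a, d). lin (\<lambda>(g, b'). tens (actT V g a) (e (b' # d))) (ycoact V b)) X)
       = vsc (c b) (lin (\<lambda>(a, d). lin (\<lambda>(k, b'). tens (actT W k a) (e (b' # d))) (ycoact W (\<sigma> b))) (phiT2 X))"
    (is "?L = ?R")
proof -
  define Br where "Br a d = lin (\<lambda>(g, b'). vsc (coef_word a * c b' * coef_word d)
      (lin (\<lambda>k. tens (actT W k (map \<sigma> a)) (e (\<sigma> b' # map \<sigma> d))) (psi g))) (ycoact V b)" for a d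
  have "?L = lin (\<lambda>(a, d). phiT2 (lin (\<lambda>(g, b'). tens (actT V g a) (e (b' # d))) (ycoact V b))) X"
    by (rule lin_lin_pair) (use X in \<open>auto simp: split_def\<close>)
  also have "\<dots> = lin (\<lambda>(a, d). lin (\<lambda>(g, b'). phiT2 (tens (actT V g a) (e (b' # d)))) (ycoact V b)) X"
    by (rule lin_cong, clarify, rule lin_lin_pair) auto
  also have "\<dots> = lin (\<lambda>(a, d). Br a d) X"
    unfolding Br_def
    by (rule lin_cong, clarify, rule lin_cong, clarify)
      (simp add: phiT2_tens phiT_actT,
       simp add: phi_word_def tens_lin_left tens_vsc_left tens_vsc_right lin_vsc_fun mult_ac)
  also have "\<dots> = ?R"
  proof -
    define H where "H = (\<lambda>(a', d'). lin (\<lambda>(k, b''). tens (actT W k a') (e (b'' # d')))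
        (lin (\<lambda>(g, b'). tens (psi g) (phi b')) (ycoact V b)))"
    have "?R = lin H (phiT2 X)"
      by (simp add: lin_vsc lin_vsc_fun_pair phi_ycoact[symmetric] H_def)
    also have "\<dots> = lin (\<lambda>(a, d). lin H (tens (phi_word a) (phi_word d))) X"
      using X by (simp add: lin_lin_pair)
    also have "\<dots> = lin (\<lambda>(a, d). Br a d) X"
    proof (rule lin_cong, clarify)
      fix a d
      have "lin H (tens (phi_word a) (phi_word d)) = vsc (coef_word a * coef_word d) (H (map \<sigma> a, map \<sigma> d))"
        by (simp add: phi_word_def tens_vsc_left tens_vsc_right lin_vsc mult.commute)
      also have "\<dots> = Br a d"
        unfolding H_def Br_def
        by (subst lin_lin_pair) (auto simp: phi_def lin_vsc_fun_pair[symmetric] lin_tens lin_vsc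
            lin_vsc_fun mult_ac)
      finally show "lin H (tens (phi_word a) (phi_word d)) = Br a d" .
    qed
    finally show ?thesis ..
  qed
  finally show ?thesis .
qed

lemma phiT_comultT: "phiT2 (comultT V w) = vsc (coef_word w) (comultT W (map \<sigma> w))"
proof (induction w)
  case Nil
  then show ?case by (simp add: phi_word_def)
next
  case (Cons b w)
  have "phiT2 (comultT V (b # w))
      = vadd (phiT2 (vmap (\<lambda>(a, d). (b # a, d)) (comultT V w)))
          (phiT2 (lin (\<lambda>(a, d). lin (\<lambda>(g, b'). tens (actT V g a) (e (b' # d))) (ycoact V b)) (comultT V w)))"
    by (simp add: lin_vadd split_def)
  also have "\<dots> = vsc (coef_word (b # w)) (comultT W (map \<sigma> (b # w)))"
    by (simp add: phiT2_vmap_Cons phiT2_braiding Cons vmap_vsc lin_vsc)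
      (simp add: vsc_def vadd_def fun_eq_iff distrib_left mult_ac)
  finally show ?case .
qed

lemma psi_phiT_tens:
  assumes "fsupp Y"
  shows "lin (\<lambda>(g, a). tens (psi g) (phi_word a)) (tens X Y) = tens (lin psi X) (phiT Y)"
proof -
  have "lin (\<lambda>(g, a). tens (psi g) (phi_word a)) (tens X Y) = lin (\<lambda>g. lin (\<lambda>a. tens (psi g) (phi_word a)) Y) X"
    by (subst lin_tens) (use assms in auto)
  also have "\<dots> = tens (lin psi X) (phiT Y)"
    unfolding phiT_def by (subst tens_lin) (use assms in auto)
  finally show ?thesis .
qed

lemma psi_phiT_coact_Cons:
  assumes X: "fsupp X"
  shows "psi_phiT (lin (\<lambda>(g, d). lin (\<lambda>(g', w'). tens (h8m g g') (e (d # w'))) X) (ycoact V b))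
       = vsc (c b) (lin (\<lambda>(k, d'). lin (\<lambda>(k', w''). tens (h8m k k') (e (d' # w''))) (psi_phiT X))
           (ycoact W (\<sigma> b)))"
    (is "?L = ?R")
proof -
  define K where "K = (\<lambda>(g, a). tens (psi g) (phi_word a))"
  define E where "E = (\<lambda>d w'. e (\<sigma> d # map \<sigma> w') :: 'b list \<Rightarrow> 'k)"
  define Mid where "Mid = lin (\<lambda>(g, d). lin (\<lambda>(g', w'). vsc (c d * coef_word w')
      (tens (h8mult (psi g) (psi g')) (E d w'))) X) (ycoact V b)"
  have "?L = lin (\<lambda>(g, d). psi_phiT (lin (\<lambda>(g', w'). tens (h8m g g') (e (d # w'))) X)) (ycoact V b)"
    by (rule lin_lin_pair) (use X in \<open>auto simp: split_def\<close>)
  also have "\<dots> = lin (\<lambda>(g, d). lin (\<lambda>(g', w'). lin K (tens (h8m g g') (e (d # w')))) X) (ycoact V b)"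
    unfolding K_def by (rule lin_cong, clarify, rule lin_lin_pair) (use X in auto)
  also have "\<dots> = Mid"
    unfolding Mid_def K_def
    by (rule lin_cong, clarify, rule lin_cong, clarify)
      (simp add: psi_phiT_tens, simp add: psi_mult phi_word_def E_def tens_vsc_right)
  finally have L: "?L = Mid" .
  define M where "M = (\<lambda>k d'. lin (\<lambda>(k', w''). tens (h8m k k') (e (d' # w''))) (lin K X))"
  have M: "M k (\<sigma> d) = lin (\<lambda>(g', w'). vsc (coef_word w') (lin (\<lambda>k'. tens (h8m k k') (E d w')) (psi g'))) X"
    for k d
  proof -
    have "M k (\<sigma> d) = lin (\<lambda>p. lin (\<lambda>(k', w''). tens (h8m k k') (e (\<sigma> d # w''))) (K p)) X"
      unfolding M_def using X by (rule lin_lin) (auto simp: K_def split: prod.splits)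
    also have "\<dots> = lin (\<lambda>(g', w'). vsc (coef_word w') (lin (\<lambda>k'. tens (h8m k k') (E d w')) (psi g'))) X"
      by (rule lin_cong, clarify) (simp add: K_def lin_tens phi_word_def lin_vsc lin_vsc_fun E_def)
    finally show ?thesis .
  qed
  have "?R = lin (\<lambda>(k, d'). M k d') (lin (\<lambda>(g, d). tens (psi g) (phi d)) (ycoact V b))"
    by (simp add: lin_vsc lin_vsc_fun_pair phi_ycoact[symmetric] M_def K_def)
  also have "\<dots> = lin (\<lambda>(g, d). lin (\<lambda>(k, d'). M k d') (tens (psi g) (phi d))) (ycoact V b)"
    by (rule lin_lin_pair) (auto simp: phi_def)
  also have "\<dots> = Mid"
    unfolding Mid_def
  proof (rule lin_cong, clarify)
    fix g d
    have "lin (\<lambda>(k, d'). M k d') (tens (psi g) (phi d)) = vsc (c d) (lin (\<lambda>k. M k (\<sigma> d)) (psi g))"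
      by (simp add: lin_tens phi_def lin_vsc lin_vsc_fun)
    also have "\<dots> = vsc (c d) (lin (\<lambda>(g', w'). lin (\<lambda>k. vsc (coef_word w')
        (lin (\<lambda>k'. tens (h8m k k') (E d w')) (psi g'))) (psi g)) X)"
      unfolding M using lin_swap[of "psi g" X "\<lambda>k p. (case p of (g', w') \<Rightarrow>
          vsc (coef_word w') (lin (\<lambda>k'. tens (h8m k k') (E d w')) (psi g')))"] X
      by (simp add: split_def)
    also have "\<dots> = lin (\<lambda>(g', w'). vsc (c d * coef_word w') (tens (h8mult (psi g) (psi g')) (E d w'))) X"
      by (simp add: lin_vsc_fun_pair[symmetric] lin_vsc_fun h8mult_def bil_def tens_lin_left mult_ac)
    finally show "lin (\<lambda>(k, d'). M k d') (tens (psi g) (phi d))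
        = lin (\<lambda>(g', w'). vsc (c d * coef_word w') (tens (h8mult (psi g) (psi g')) (E d w'))) X" .
  qed
  finally show ?thesis using L by simp
qed

lemma phiT_coactT: "psi_phiT (coactT V w) = vsc (coef_word w) (coactT W (map \<sigma> w))"
proof (induction w)
  case Nil
  show ?case by (simp add: phi_word_def psi_unit)
next
  case (Cons b w)
  then show ?case
    by (simp add: psi_phiT_coact_Cons lin_vsc lin_vsc_fun_pair mult.commute)
qed

definition phi_bos :: "'b list \<times> hb \<Rightarrow> 'b list \<times> hb \<Rightarrow> 'k" where
  "phi_bos p = (case p of (w, h) \<Rightarrow> ptens (phi_word w) (psi h))"

lemma phi_bos_simp[simp]: "phi_bos (w, h) = tens (phi_word w) (psi h)"
  by (simp add: phi_bos_def ptens_tens)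

lemma fsupp_phi_bos[simp]: "fsupp (phi_bos p)" by (cases p) simp

lemma phi_bos_tens:
  assumes "fsupp X"
  shows "lin phi_bos (tens X (Y :: hb \<Rightarrow> 'k)) = tens (phiT X) (lin psi Y)"
proof -
  have "lin phi_bos (tens X Y) = lin (\<lambda>a. lin (\<lambda>h. phi_bos (a, h)) Y) X"
    by (subst lin_tens) (use assms in auto)
  also have "\<dots> = tens (phiT X) (lin psi Y)"
    unfolding phiT_def by (subst tens_lin) (use assms in auto)
  finally show ?thesis .
qed

lemma bil_tens_e:
  "bil K (tens (e a) (u :: hb \<Rightarrow> 'k)) (tens (e b) (v :: hb \<Rightarrow> 'k)) = lin (\<lambda>k. lin (\<lambda>k'. K (a, k) (b, k')) v) u"
  unfolding bil_def by (simp add: lin_tens)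

lemma phi_bos_bm: "lin phi_bos (bm V (w, h) (w', h')) = bmult W (phi_bos (w, h)) (phi_bos (w', h'))"
proof -
  define s where "s = coef_word w * coef_word w'"
  define T where "T = (\<lambda>k1. tmult (e (map \<sigma> w)) (actT W k1 (map \<sigma> w')))"
  have fT[simp]: "fsupp (T k)" for k by (simp add: T_def)
  have "lin phi_bos (bm V (w, h) (w', h')) = lin (\<lambda>(h1, h2). lin phi_bos (tens (tmult (e w) (actT V h1 w')) (h8m h2 h'))) (h8comult h)"
    unfolding bm_def ptens_tens by (simp, rule lin_lin_pair) auto
  also have "\<dots> = lin (\<lambda>(h1, h2). tens (tmult (phi_word w) (lin (\<lambda>k. vsc (coef_word w') (actT W k (map \<sigma> w'))) (psi h1))) (h8mult (psi h2) (psi h'))) (h8comult h)"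
    by (rule lin_cong, clarify) (simp add: phi_bos_tens phiT_tmult psi_mult phiT_actT)
  also have "\<dots> = vsc s (lin (\<lambda>(h1, h2). tens (lin T (psi h1)) (h8mult (psi h2) (psi h'))) (h8comult h))"
  proof -
    have "tmult (phi_word w) (lin (\<lambda>k. vsc (coef_word w') (actT W k (map \<sigma> w'))) (psi h1)) = vsc s (lin T (psi h1))" for h1
      by (simp add: phi_word_def tmult_vsc_left lin_vsc_fun tmult_vsc_right s_def T_def tmult_lin_right mult.commute)
    then show ?thesis by (simp add: tens_vsc_left lin_vsc_fun_pair)
  qed
  also have "\<dots> = vsc s (lin (\<lambda>(h1, h2). lin (\<lambda>(k1, k2). tens (T k1) (lin (h8m k2) (psi h'))) (tens (psi h1) (psi h2))) (h8comult h))"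
  proof -
    have "tens (lin T (psi h1)) (h8mult (psi h2) (psi h')) = lin (\<lambda>(k1, k2). tens (T k1) (lin (h8m k2) (psi h'))) (tens (psi h1) (psi h2))" for h1 h2
      by (simp add: lin_tens tens_lin h8mult_def bil_def)
    then show ?thesis by simp
  qed
  also have "\<dots> = vsc s (lin (\<lambda>(k1, k2). tens (T k1) (lin (h8m k2) (psi h'))) (lin (\<lambda>(h1, h2). tens (psi h1) (psi h2)) (h8comult h)))"
    by (subst lin_lin_pair) auto
  also have "\<dots> = vsc s (lin (\<lambda>k. lin (\<lambda>(k1, k2). tens (T k1) (lin (h8m k2) (psi h'))) (h8comult k)) (psi h))"
    by (simp add: psi_comult lin_lin)
  also have "\<dots> = vsc s (lin (\<lambda>k. lin (\<lambda>k'. lin (\<lambda>(k1, k2). tens (T k1) (h8m k2 k')) (h8comult k)) (psi h')) (psi h))"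
  proof -
    have "lin (\<lambda>(k1, k2). tens (T k1) (lin (h8m k2) (psi h'))) (h8comult k) = lin (\<lambda>k'. lin (\<lambda>(k1, k2). tens (T k1) (h8m k2 k')) (h8comult k)) (psi h')" for k
    proof -
      have "lin (\<lambda>(k1, k2). tens (T k1) (lin (h8m k2) (psi h'))) (h8comult k) = lin (\<lambda>p. lin (\<lambda>k'. tens (T (fst p)) (h8m (snd p) k')) (psi h')) (h8comult k)"
        by (simp add: tens_lin_right split_def)
      also have "\<dots> = lin (\<lambda>k'. lin (\<lambda>p. tens (T (fst p)) (h8m (snd p) k')) (h8comult k)) (psi h')"
        by (rule lin_swap) auto
      finally show ?thesis by (simp add: split_def)
    qed
    then show ?thesis by simp
  qed
  also have "\<dots> = bmult W (phi_bos (w, h)) (phi_bos (w', h'))"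
    by (simp add: bmult_def phi_word_def tens_vsc_left bil_def lin_vsc lin_vsc_fun s_def mult.commute)
       (simp add: bil_def[symmetric] bil_tens_e bm_def ptens_tens T_def)
  finally show ?thesis .
qed

lemma phi_bos2_bc:
  "lin (\<lambda>(p1, p2). tens (phi_bos p1) (phi_bos p2)) (bc V (w, h))
   = lin (\<lambda>(a1, a2). lin (\<lambda>(g, a2'). lin (\<lambda>(h1, h2). tens (tens (phi_word a1) (h8mult (psi g) (psi h1)))
        (tens (phi_word a2') (psi h2))) (h8comult h)) (coactT V a2)) (comultT V w)"
proof -
  have T: "lin (\<lambda>(p1, p2). tens (phi_bos p1) (phi_bos p2)) (tens (tens (e a1) X) (e (a2', h2)))
      = tens (tens (phi_word a1) (lin psi X)) (tens (phi_word a2') (psi h2))" for a1 X a2' h2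
    by (simp add: lin_tens tens_lin_left tens_lin_right)
  define F2 where "F2 = (\<lambda>(p1, p2). tens (phi_bos p1) (phi_bos (p2 :: 'b list \<times> hb)))"
  have "lin F2 (bc V (w, h)) = lin (\<lambda>(a1, a2). lin F2 (lin (\<lambda>(g, a2'). lin (\<lambda>(h1, h2).
      tens (tens (e a1) (h8m g h1)) (e (a2', h2))) (h8comult h)) (coactT V a2))) (comultT V w)"
    unfolding bc_def ptens_tens by (simp, rule lin_lin_pair) (auto simp: split_def)
  also have "\<dots> = lin (\<lambda>(a1, a2). lin (\<lambda>(g, a2'). lin F2 (lin (\<lambda>(h1, h2).
      tens (tens (e a1) (h8m g h1)) (e (a2', h2))) (h8comult h))) (coactT V a2)) (comultT V w)"
    by (rule lin_cong, clarify, rule lin_lin_pair) (auto simp: split_def)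
  also have "\<dots> = lin (\<lambda>(a1, a2). lin (\<lambda>(g, a2'). lin (\<lambda>(h1, h2). lin F2
      (tens (tens (e a1) (h8m g h1)) (e (a2', h2)))) (h8comult h)) (coactT V a2)) (comultT V w)"
    by (rule lin_cong, clarify, rule lin_cong, clarify, rule lin_lin_pair) auto
  finally show ?thesis by (simp add: F2_def T psi_mult)
qed

lemma coactT_W_phi_word:
  "lin (\<lambda>k. vsc (coef_word a1 * coef_word a2) (lin (\<lambda>(g, a2'). lin (\<lambda>(k1, k2).
      tens (tens (e (map \<sigma> a1)) (h8m g k1)) (e (a2', k2))) (h8comult k)) (coactT W (map \<sigma> a2)))) (psi h)
   = lin (\<lambda>(g, a2'). lin (\<lambda>(h1, h2). tens (tens (phi_word a1) (h8mult (psi g) (psi h1)))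
       (tens (phi_word a2') (psi h2))) (h8comult h)) (coactT V a2)"
    (is "lin (\<lambda>k. vsc _ (?Q k)) _ = _")
proof -
  define R where "R = (\<lambda>(k :: hb) (g :: hb) (a2' :: 'b list).
      lin (\<lambda>(k1, k2). tens (tens (e (map \<sigma> a1) :: 'b list \<Rightarrow> 'k) (h8m g k1)) (e (a2', k2))) (h8comult k))"
  have fR[simp]: "fsupp (R k g a2')" for k g a2' by (simp add: R_def split_def)
  have Q: "?Q k = lin (\<lambda>(g, a2'). R k g a2') (coactT W (map \<sigma> a2))" for k by (simp add: R_def)
  have F: "vsc (coef_word a2) (?Q k)
      = lin (\<lambda>(g0, a). vsc (coef_word a) (lin (\<lambda>g. R k g (map \<sigma> a)) (psi g0))) (coactT V a2)" for k
  proof -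
    have "vsc (coef_word a2) (?Q k) = lin (\<lambda>(g, a2'). R k g a2') (psi_phiT (coactT V a2))"
      by (simp add: Q lin_vsc phiT_coactT)
    also have "\<dots> = lin (\<lambda>(g0, a). lin (\<lambda>(g, a2'). R k g a2') (tens (psi g0) (phi_word a))) (coactT V a2)"
      by (rule lin_lin_pair) auto
    finally show ?thesis
      by (simp add: lin_tens phi_word_def lin_vsc lin_vsc_fun)
  qed
  have "lin (\<lambda>k. vsc (coef_word a1 * coef_word a2) (?Q k)) (psi h)
      = lin (\<lambda>k. vsc (coef_word a1) (lin (\<lambda>(g0, a). vsc (coef_word a)
          (lin (\<lambda>g. R k g (map \<sigma> a)) (psi g0))) (coactT V a2))) (psi h)"
    by (rule lin_cong) (simp add: F[symmetric])
  also have "\<dots> = lin (\<lambda>k. lin (\<lambda>p. vsc (coef_word a1 * coef_word (snd p))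
      (lin (\<lambda>g. R k g (map \<sigma> (snd p))) (psi (fst p)))) (coactT V a2)) (psi h)"
    by (rule lin_cong) (simp add: lin_vsc_fun[symmetric] split_def)
  also have "\<dots> = lin (\<lambda>p. lin (\<lambda>k. vsc (coef_word a1 * coef_word (snd p))
      (lin (\<lambda>g. R k g (map \<sigma> (snd p))) (psi (fst p)))) (psi h)) (coactT V a2)"
    by (rule lin_swap) auto
  also have "\<dots> = lin (\<lambda>(g0, a). vsc (coef_word a1 * coef_word a)
      (lin (\<lambda>k. lin (\<lambda>g. R k g (map \<sigma> a)) (psi g0)) (psi h))) (coactT V a2)"
    by (simp add: split_def lin_vsc_fun)
  finally show ?thesis
    unfolding R_def
    by (simp add: lin_psi_h8comult_mult phi_word_def tens_vsc_left tens_vsc_right lin_vsc_fun_pair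
        mult.commute)
qed

lemma bc_W_phi_bos:
  "lin (bc W) (phi_bos (w, h))
   = lin (\<lambda>(a1, a2). lin (\<lambda>(g, a2'). lin (\<lambda>(h1, h2). tens (tens (phi_word a1) (h8mult (psi g) (psi h1)))
        (tens (phi_word a2') (psi h2))) (h8comult h)) (coactT V a2)) (comultT V w)"
proof -
  define R where "R = (\<lambda>(a1 :: 'b list) (k :: hb) (g :: hb) (a2' :: 'b list).
      lin (\<lambda>(k1, k2). tens (tens (e a1 :: 'b list \<Rightarrow> 'k) (h8m g k1)) (e (a2', k2))) (h8comult k))"
  define Q where "Q = (\<lambda>(k :: hb) (a1 :: 'b list) (a2 :: 'b list). lin (\<lambda>(g, a2'). R a1 k g a2') (coactT W a2))"
  have fR[simp]: "fsupp (R a1 k g a2')" for a1 k g a2' by (simp add: R_def split_def)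
  have fQ[simp]: "fsupp (Q k a1 a2)" for k a1 a2 by (simp add: Q_def split_def)
  have Q: "lin (\<lambda>k. vsc (coef_word a1 * coef_word a2) (Q k (map \<sigma> a1) (map \<sigma> a2))) (psi h)
      = lin (\<lambda>(g, a2'). lin (\<lambda>(h1, h2). tens (tens (phi_word a1) (h8mult (psi g) (psi h1)))
          (tens (phi_word a2') (psi h2))) (h8comult h)) (coactT V a2)" for a1 a2
    using coactT_W_phi_word[of a1 a2] by (simp add: Q_def R_def)
  have bcW: "bc W (a, k) = lin (\<lambda>(a1, a2). Q k a1 a2) (comultT W a)" for a k
    by (simp add: bc_def Q_def R_def ptens_tens)
  have "lin (bc W) (phi_bos (w, h)) = vsc (coef_word w) (lin (\<lambda>k. bc W (map \<sigma> w, k)) (psi h))"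
    by (simp add: phi_word_def tens_vsc_left lin_vsc lin_tens)
  also have "\<dots> = lin (\<lambda>k. lin (\<lambda>(a1, a2). Q k a1 a2) (phiT2 (comultT V w))) (psi h)"
    by (simp add: bcW phiT_comultT lin_vsc lin_vsc_fun)
  also have "\<dots> = lin (\<lambda>k. lin (\<lambda>(a1, a2). vsc (coef_word a1 * coef_word a2) (Q k (map \<sigma> a1) (map \<sigma> a2)))
      (comultT V w)) (psi h)"
    by (simp add: lin_lin_pair phi_word_def tens_vsc_left tens_vsc_right lin_vsc mult.commute)
  also have "\<dots> = lin (\<lambda>(a1, a2). lin (\<lambda>k. vsc (coef_word a1 * coef_word a2) (Q k (map \<sigma> a1) (map \<sigma> a2)))
      (psi h)) (comultT V w)"
    using lin_swap[of "psi h" "comultT V w" "\<lambda>k p. vsc (coef_word (fst p) * coef_word (snd p))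
        (Q k (map \<sigma> (fst p)) (map \<sigma> (snd p)))"]
    by (simp add: split_def)
  finally show ?thesis by (simp add: Q)
qed

lemma phi_bos_bc:
  "lin (bc W) (phi_bos (w, h)) = lin (\<lambda>(p1, p2). tens (phi_bos p1) (phi_bos p2)) (bc V (w, h))"
  by (simp only: bc_W_phi_bos phi_bos2_bc)

end

context monomial_twist_iso
begin

lemma lin_phi_Vsp: "finite (ybas V) \<Longrightarrow> v \<in> Vsp V \<Longrightarrow> lin phi v \<in> Vsp W"
proof -
  assume fin: "finite (ybas V)" and v: "v \<in> Vsp V"
  have "fsupp v" using v fin by (auto simp: Vsp_def fsupp_def intro: finite_subset)
  have "b' \<in> ybas W" if "lin phi v b' \<noteq> 0" for b'
  proof -
    obtain b where "v b \<noteq> 0" "phi b b' \<noteq> 0"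
      using \<open>lin phi v b' \<noteq> 0\<close> by (auto simp: lin_apply elim: sum.not_neutral_contains_not_neutral)
    then show ?thesis
      using v sigma_ybas by (auto simp: Vsp_def phi_def vsc_def e_def split: if_splits)
  qed
  then show ?thesis by (simp add: Vsp_def)
qed

text \<open>\<open>lin\<close> is linear only on finitely supported vectors, hence the finiteness of the basis.\<close>

theorem yd_iso_twist:
  assumes fin: "finite (ybas V)"
  shows "yd_iso (twist (lin psi) V) W"
proof -
  interpret inverse: monomial_twist_iso psi W V "inv \<sigma>" "\<lambda>b'. 1 / c (inv \<sigma> b')"
    by (rule monomial_twist_iso_inverse)
  have inverse_phi: "inverse.phi = phi_inv"
    by (simp add: inverse.phi_def phi_inv_def fun_eq_iff)
  have finW: "finite (ybas W)" using fin sigma_ybas finite_imageI by metis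
  have Vsp_twist: "Vsp (twist (lin psi) V) = Vsp V" by (simp add: Vsp_def twist_def)
  have fsupp_Vsp: "fsupp v" if "v \<in> Vsp X" "finite (ybas X)" for v and X :: "('k, 'b) ydm"
    using that by (auto simp: Vsp_def fsupp_def intro: finite_subset)
  show ?thesis
    unfolding yd_iso_def
  proof (intro exI[of _ phi] conjI ballI allI)
    show "phi b \<in> Vsp W" if "b \<in> ybas (twist (lin psi) V)" for b
      using that sigma_ybas by (auto simp: twist_def Vsp_def phi_def vsc_def e_def)
    show "bij_betw (lin phi) (Vsp (twist (lin psi) V)) (Vsp W)"
      unfolding Vsp_twist
    proof (rule bij_betw_byWitness[of _ "lin phi_inv"])
      show "lin phi ` Vsp V \<subseteq> Vsp W" using lin_phi_Vsp[OF fin] by blast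
      show "lin phi_inv ` Vsp W \<subseteq> Vsp V" using inverse.lin_phi_Vsp[OF finW] unfolding inverse_phi by blast
    qed (use fin finW fsupp_Vsp in \<open>auto simp: lin_phi_inv_phi lin_phi_phi_inv\<close>)
  next
    fix h b
    have "lin phi (yact (twist (lin psi) V) h b) = lin (\<lambda>g. lin phi (yact V g b)) (psi h)"
      by (simp add: twist_def lin_lin)
    also have "\<dots> = vsc (c b) (yact W h (\<sigma> b))" by (simp add: yact_intertwine phi_def[abs_def])
    also have "\<dots> = lin (yact W h) (phi b)" by (simp add: phi_def lin_vsc)
    finally show "lin (yact W h) (phi b) = lin phi (yact (twist (lin psi) V) h b)" by simp
  next
    fix b
    have "lin (\<lambda>(g, d). tens (e g) (phi d)) (tens (psi g) (e d)) = tens (psi g) (phi d)" for g d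
      by (simp add: lin_tens tens_lin_left[symmetric] lin_id)
    then have "lin (\<lambda>(g, c'). tens (e g) (phi c')) (ycoact (twist (lin psi) V) b)
        = lin (\<lambda>(g, d). tens (psi g) (phi d)) (ycoact V b)"
      by (simp add: twist_def inv_lin_psi lin_lin_pair)
    also have "\<dots> = vsc (c b) (ycoact W (\<sigma> b))" by (simp add: ycoact_intertwine phi_def[abs_def])
    also have "\<dots> = lin (ycoact W) (phi b)" by (simp add: phi_def lin_vsc)
    finally show "lin (\<lambda>(g, c'). tens (e g) (phi c')) (ycoact (twist (lin psi) V) b) = lin (ycoact W) (phi b)" .
  qed
qed

end

section \<open>Nichols ideals and bosonizations\<close>

lemma nichols_admissible_zero: "nichols_admissible X {vzero}"
proof -
  have "lin (comultT X) vzero \<in> coideal_target {vzero} (TV X)"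
    using lspan_zero by (simp add: coideal_target_def vzero_fun)
  moreover have "tmult (tmult a vzero) b = vzero" for a b :: "_ list \<Rightarrow> 'a"
    by (simp add: tmult_def bil_def vzero_fun)
  moreover have "(\<lambda>w. if length w = n then vzero w else 0) = vzero" for n :: nat
    by (simp add: vzero_def fun_eq_iff)
  moreover have "vzero \<in> TV X" by (simp add: TV_def vzero_fun)
  moreover have "vadd vzero vzero = vzero" "vsc a vzero = vzero" for a
    by (simp_all add: vzero_fun vadd_def vsc_def)
  ultimately show ?thesis
    unfolding nichols_admissible_def by (auto simp: vzero_fun)
qed

lemma coideal_target_mono: "J \<subseteq> J' \<Longrightarrow> coideal_target J T \<subseteq> coideal_target J' T"
  unfolding coideal_target_def by (rule lspan_mono) blast

lemma TV_vadd:
  assumes "u \<in> TV X" "v \<in> TV X"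
  shows "vadd u v \<in> TV X"
proof -
  have supp: "{w. vadd u v w \<noteq> 0} \<subseteq> {w. u w \<noteq> 0} \<union> {w. v w \<noteq> 0}" by (auto simp: vadd_def)
  then have "fsupp (vadd u v)" using assms by (auto simp: TV_def fsupp_def intro: finite_subset)
  with supp show ?thesis using assms unfolding TV_def by blast
qed

lemma nichols_admissible_sum:
  assumes J1: "nichols_admissible X J1" and J2: "nichols_admissible X J2"
  shows "nichols_admissible X {vadd u v | u v. u \<in> J1 \<and> v \<in> J2}" (is "nichols_admissible X ?J")
proof -
  have sub1: "J1 \<subseteq> ?J"
  proof
    fix u assume "u \<in> J1"
    moreover have "vzero \<in> J2" using J2 by (simp add: nichols_admissible_def)
    moreover have "vadd u vzero = u" by (simp add: vadd_def vzero_def)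
    ultimately show "u \<in> ?J" by force
  qed
  have sub2: "J2 \<subseteq> ?J"
  proof
    fix u assume "u \<in> J2"
    moreover have "vzero \<in> J1" using J1 by (simp add: nichols_admissible_def)
    moreover have "vadd vzero u = u" by (simp add: vadd_def vzero_def)
    ultimately show "u \<in> ?J" by force
  qed
  have T1: "J1 \<subseteq> TV X" and T2: "J2 \<subseteq> TV X" using J1 J2 by (auto simp: nichols_admissible_def)
  have ct_mono: "coideal_target J1 (TV X) \<subseteq> coideal_target ?J (TV X)"
    "coideal_target J2 (TV X) \<subseteq> coideal_target ?J (TV X)"
    using sub1 sub2 by (auto intro!: coideal_target_mono)
  show ?thesis
    unfolding nichols_admissible_def
  proof (intro conjI ballI allI impI)
    show "?J \<subseteq> TV X" using T1 T2 TV_vadd by blast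
    show "vzero \<in> ?J" using sub1 J1 by (auto simp: nichols_admissible_def)
  next
    fix x y assume "x \<in> ?J" "y \<in> ?J"
    then obtain u1 v1 u2 v2 where "x = vadd u1 v1" "y = vadd u2 v2" "u1 \<in> J1" "u2 \<in> J1" "v1 \<in> J2" "v2 \<in> J2" by blast
    moreover have "vadd (vadd u1 v1) (vadd u2 v2) = vadd (vadd u1 u2) (vadd v1 v2)"
      by (simp add: vadd_def fun_eq_iff add_ac)
    moreover have "vadd u1 u2 \<in> J1" using J1 \<open>u1 \<in> J1\<close> \<open>u2 \<in> J1\<close> by (simp add: nichols_admissible_def)
    moreover have "vadd v1 v2 \<in> J2" using J2 \<open>v1 \<in> J2\<close> \<open>v2 \<in> J2\<close> by (simp add: nichols_admissible_def)
    ultimately show "vadd x y \<in> ?J" by blast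
  next
    fix a x assume "x \<in> ?J"
    then obtain u v where "x = vadd u v" "u \<in> J1" "v \<in> J2" by blast
    moreover have "vsc a (vadd u v) = vadd (vsc a u) (vsc a v)" by (simp add: vsc_def vadd_def fun_eq_iff distrib_left)
    moreover have "vsc a u \<in> J1" "vsc a v \<in> J2" using J1 J2 \<open>u \<in> J1\<close> \<open>v \<in> J2\<close> by (simp_all add: nichols_admissible_def)
    ultimately show "vsc a x \<in> ?J" by blast
  next
    fix x n assume "x \<in> ?J"
    then obtain u v where "x = vadd u v" "u \<in> J1" "v \<in> J2" by blast
    moreover have "(\<lambda>w. if length w = n then vadd u v w else 0) = vadd (\<lambda>w. if length w = n then u w else 0) (\<lambda>w. if length w = n then v w else 0)"
      by (simp add: vadd_def fun_eq_iff)
    moreover have "(\<lambda>w. if length w = n then u w else 0) \<in> J1" "(\<lambda>w. if length w = n then v w else 0) \<in> J2"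
      using J1 J2 \<open>u \<in> J1\<close> \<open>v \<in> J2\<close> by (simp_all add: nichols_admissible_def)
    ultimately show "(\<lambda>w. if length w = n then x w else 0) \<in> ?J" by blast
  next
    fix x and w :: "'b list" assume "x \<in> ?J" "length w < 2"
    then obtain u v where "x = vadd u v" "u \<in> J1" "v \<in> J2" by blast
    moreover have "u w = 0" "v w = 0" using J1 J2 \<open>u \<in> J1\<close> \<open>v \<in> J2\<close> \<open>length w < 2\<close>
      by (simp_all add: nichols_admissible_def)
    ultimately show "x w = 0" by (simp add: vadd_def)
  next
    fix x a b assume "x \<in> ?J" "a \<in> TV X" "b \<in> TV X"
    then obtain u v where uv: "x = vadd u v" "u \<in> J1" "v \<in> J2" by blast
    have fu: "fsupp u" "fsupp v" "fsupp a" "fsupp b" using uv T1 T2 \<open>a \<in> TV X\<close> \<open>b \<in> TV X\<close> by (auto simp: TV_def)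
    have "tmult (tmult a (vadd u v)) b = vadd (tmult (tmult a u) b) (tmult (tmult a v) b)"
      using fu by (simp add: tmult_vadd_left tmult_vadd_right)
    moreover have "tmult (tmult a u) b \<in> J1" "tmult (tmult a v) b \<in> J2"
      using J1 J2 uv \<open>a \<in> TV X\<close> \<open>b \<in> TV X\<close> by (simp_all add: nichols_admissible_def)
    ultimately show "tmult (tmult a x) b \<in> ?J" using uv(1) by blast
  next
    fix x assume "x \<in> ?J"
    then obtain u v where uv: "x = vadd u v" "u \<in> J1" "v \<in> J2" by blast
    have fu: "fsupp u" "fsupp v" using uv T1 T2 by (auto simp: TV_def)
    have "lin (comultT X) u \<in> coideal_target ?J (TV X)" using uv J1 ct_mono unfolding nichols_admissible_def by blast
    moreover have "lin (comultT X) v \<in> coideal_target ?J (TV X)" using uv J2 ct_mono unfolding nichols_admissible_def by blast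
    ultimately show "lin (comultT X) x \<in> coideal_target ?J (TV X)"
      unfolding uv(1) lin_vadd[OF fu] coideal_target_def by (rule lspan_add)
  qed
qed

lemma nichols_ideal_zero: "(\<lambda>w. 0) \<in> nichols_ideal X"
  using nichols_admissible_zero[of X] unfolding nichols_ideal_def vzero_fun by blast

lemma nichols_ideal_vsc: "u \<in> nichols_ideal X \<Longrightarrow> vsc a u \<in> nichols_ideal X"
  unfolding nichols_ideal_def nichols_admissible_def by blast

lemma nichols_ideal_vadd: "u \<in> nichols_ideal X \<Longrightarrow> v \<in> nichols_ideal X \<Longrightarrow> vadd u v \<in> nichols_ideal X"
proof -
  assume "u \<in> nichols_ideal X" "v \<in> nichols_ideal X"
  then obtain J1 J2 where "nichols_admissible X J1" "u \<in> J1" "nichols_admissible X J2" "v \<in> J2"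
    unfolding nichols_ideal_def by blast
  then show ?thesis unfolding nichols_ideal_def using nichols_admissible_sum by blast
qed

lemma nichols_ideal_sum:
  assumes "finite H" "\<And>h. h \<in> H \<Longrightarrow> f h \<in> nichols_ideal X"
  shows "(\<lambda>w. \<Sum>h\<in>H. a h * f h w) \<in> nichols_ideal X"
  using assms
proof (induction H rule: finite_induct)
  case empty
  then show ?case by (simp add: nichols_ideal_zero)
next
  case (insert x F)
  have "(\<lambda>w. \<Sum>h\<in>insert x F. a h * f h w) = vadd (vsc (a x) (f x)) (\<lambda>w. \<Sum>h\<in>F. a h * f h w)"
    using insert by (simp add: vadd_def vsc_def)
  then show ?case using insert by (simp add: nichols_ideal_vadd nichols_ideal_vsc)
qed

lemma vzero_NV: "vzero \<in> NV X"
  by (simp add: NV_def BV_def vzero_fun nichols_ideal_zero)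

context monomial_twist_iso
begin

lemma inj_map_sigma: "inj (map \<sigma>)"
  using bij_sigma by (simp add: bij_def inj_mapI)

lemma phi_word_apply: "phi_word v (map \<sigma> w) = (if v = w then coef_word w else 0)"
  using inj_map_sigma by (auto simp: phi_word_def vsc_def e_def inj_eq)

lemma map_sigma_surj: "w' = map \<sigma> (map (inv \<sigma>) w')"
  using bij_sigma by (simp add: map_idI bij_is_surj surj_f_inv_f)

lemma phiT_apply:
  assumes "fsupp u"
  shows "phiT u (map \<sigma> w) = coef_word w * u w"
proof (cases "u w = 0")
  case True
  then show ?thesis by (auto simp: phiT_def lin_apply phi_word_apply intro!: sum.neutral)
next
  case False
  have "phiT u (map \<sigma> w) = (\<Sum>v\<in>{v. u v \<noteq> 0}. if v = w then u w * coef_word w else 0)"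
    unfolding phiT_def lin_apply phi_word_apply by (rule sum.cong) auto
  also have "\<dots> = u w * coef_word w" using False assms by (simp add: fsupp_def)
  finally show ?thesis by simp
qed

lemma phiT_supp:
  assumes "phiT u w' \<noteq> 0"
  shows "\<exists>v. u v \<noteq> 0 \<and> w' = map \<sigma> v"
proof (rule ccontr)
  assume "\<not> ?thesis"
  then have "\<And>v. u v \<noteq> 0 \<Longrightarrow> phi_word v w' = 0" by (auto simp: phi_word_def vsc_def e_def)
  then have "phiT u w' = 0" by (auto simp: phiT_def lin_apply intro!: sum.neutral)
  then show False using assms by simp
qed

lemma phiT_TV: "u \<in> TV V \<Longrightarrow> phiT u \<in> TV W"
proof -
  assume u: "u \<in> TV V"
  have "fsupp (phiT u)" using u by (simp add: TV_def)
  moreover have "set w' \<subseteq> ybas W" if nz: "phiT u w' \<noteq> 0" for w'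
  proof -
    obtain v where "u v \<noteq> 0" "w' = map \<sigma> v" using phiT_supp[OF nz] by blast
    then show ?thesis using u sigma_ybas by (auto simp: TV_def)
  qed
  ultimately show ?thesis by (simp add: TV_def)
qed

lemma coef_word_nonzero: "coef_word w \<noteq> 0"
  by (induction w) (simp_all add: c_nonzero)

abbreviation phiT_inv where "phiT_inv \<equiv> monomial_twist_iso.phiT (inv \<sigma>) (\<lambda>b'. 1 / c (inv \<sigma> b'))"

lemma phi_word_inv_map:
  "monomial_twist_iso.phi_word (inv \<sigma>) (\<lambda>b'. 1 / c (inv \<sigma> b')) (map \<sigma> w) = vsc (1 / coef_word w) (e w)"
proof -
  interpret inverse: monomial_twist_iso psi W V "inv \<sigma>" "\<lambda>b'. 1 / c (inv \<sigma> b')"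
    by (rule monomial_twist_iso_inverse)
  have "map (inv \<sigma>) (map \<sigma> w) = w" by (induction w) simp_all
  moreover have "inverse.coef_word (map \<sigma> w) = 1 / coef_word w"
    by (induction w) simp_all
  ultimately show ?thesis by (simp add: inverse.phi_word_def)
qed

lemma phiT_inv_phiT: "fsupp u \<Longrightarrow> phiT_inv (phiT u) = u"
proof -
  interpret inverse: monomial_twist_iso psi W V "inv \<sigma>" "\<lambda>b'. 1 / c (inv \<sigma> b')"
    by (rule monomial_twist_iso_inverse)
  assume u: "fsupp u"
  have "phiT_inv (phi_word w) = e w" for w
    using coef_word_nonzero[of w] by (simp add: phi_word_def inverse.phiT_def lin_vsc phi_word_inv_map)
  moreover have "phiT_inv (phiT u) = lin (\<lambda>w. phiT_inv (phi_word w)) u"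
    unfolding phiT_def[of u] inverse.phiT_def by (rule lin_lin) (use u in auto)
  ultimately show ?thesis using u by (simp add: lin_id)
qed

lemma phiT_phiT_inv: "fsupp u \<Longrightarrow> phiT (phiT_inv u) = u"
proof -
  interpret inverse: monomial_twist_iso psi W V "inv \<sigma>" "\<lambda>b'. 1 / c (inv \<sigma> b')"
    by (rule monomial_twist_iso_inverse)
  assume u: "fsupp u"
  have "phiT (inverse.phi_word w') = e w'" for w'
  proof -
    define w where "w = map (inv \<sigma>) w'"
    have w': "w' = map \<sigma> w" unfolding w_def by (rule map_sigma_surj)
    show ?thesis
      using coef_word_nonzero[of w] by (simp add: w' phi_word_inv_map lin_vsc phiT_def phi_word_def)
  qed
  moreover have "phiT (phiT_inv u) = lin (\<lambda>w'. phiT (inverse.phi_word w')) u"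
    unfolding phiT_def inverse.phiT_def[of u] by (rule lin_lin) (use u in auto)
  ultimately show ?thesis using u by (simp add: lin_id)
qed

lemma phiT_surj_TV: "a \<in> TV W \<Longrightarrow> \<exists>a'\<in>TV V. phiT a' = a"
proof -
  interpret inverse: monomial_twist_iso psi W V "inv \<sigma>" "\<lambda>b'. 1 / c (inv \<sigma> b')"
    by (rule monomial_twist_iso_inverse)
  assume a: "a \<in> TV W"
  show ?thesis
  proof
    show "phiT_inv a \<in> TV V" using a by (rule inverse.phiT_TV)
    show "phiT (phiT_inv a) = a" using a phiT_phiT_inv by (simp add: TV_def)
  qed
qed

lemma phiT_comult:
  assumes "fsupp u"
  shows "lin (comultT W) (phiT u) = lin (\<lambda>(a, d). tens (phi_word a) (phi_word d)) (lin (comultT V) u)"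
proof -
  have "lin (comultT W) (phiT u) = lin (\<lambda>w. lin (comultT W) (phi_word w)) u"
    unfolding phiT_def by (rule lin_lin) (use assms in auto)
  also have "\<dots> = lin (\<lambda>w. lin (\<lambda>(a, d). tens (phi_word a) (phi_word d)) (comultT V w)) u"
    by (rule lin_cong) (subst phiT_comultT, simp add: phi_word_def lin_vsc)
  also have "\<dots> = lin (\<lambda>(a, d). tens (phi_word a) (phi_word d)) (lin (comultT V) u)"
    by (rule lin_lin[symmetric]) (use assms in auto)
  finally show ?thesis .
qed

lemma phiT_coideal_target:
  assumes J: "J \<subseteq> TV V" and x: "x \<in> coideal_target J (TV V)"
  shows "lin (\<lambda>(a, d). tens (phi_word a) (phi_word d)) x \<in> coideal_target (phiT ` J) (TV W)"
  unfolding coideal_target_def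
proof (rule lspan_image[OF _ _ x[unfolded coideal_target_def]])
  fix s assume "s \<in> {tens j t |j t. j \<in> J \<and> t \<in> TV V} \<union> {tens t j |j t. j \<in> J \<and> t \<in> TV V}"
  then obtain j t where jt: "j \<in> J" "t \<in> TV V" "s = tens j t \<or> s = tens t j" by blast
  have ft: "fsupp j" "fsupp t" using jt J by (auto simp: TV_def)
  then show "fsupp s" using jt by auto
  have P: "phiT j \<in> phiT ` J" "phiT t \<in> TV W" using jt phiT_TV by auto
  show "lin (\<lambda>(a, d). tens (phi_word a) (phi_word d)) s
      \<in> {tens j t |j t. j \<in> phiT ` J \<and> t \<in> TV W} \<union> {tens t j |j t. j \<in> phiT ` J \<and> t \<in> TV W}"
    using jt(3)
  proof (elim disjE)
    assume "s = tens j t"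
    then have "lin (\<lambda>(a, d). tens (phi_word a) (phi_word d)) s = tens (phiT j) (phiT t)"
      using ft phiT2_tens by simp
    then show ?thesis using P by blast
  next
    assume "s = tens t j"
    then have "lin (\<lambda>(a, d). tens (phi_word a) (phi_word d)) s = tens (phiT t) (phiT j)"
      using ft phiT2_tens by simp
    then show ?thesis using P by blast
  qed
qed

lemma nichols_admissible_phiT:
  assumes J: "nichols_admissible V J"
  shows "nichols_admissible W (phiT ` J)"
proof -
  have JT: "J \<subseteq> TV V" using J by (simp add: nichols_admissible_def)
  have fJ: "fsupp u" if "u \<in> J" for u using JT that by (auto simp: TV_def)
  show ?thesis
    unfolding nichols_admissible_def
  proof (intro conjI ballI allI impI)
    show "phiT ` J \<subseteq> TV W" using JT phiT_TV by blast
    have "phiT vzero = vzero" by (simp add: phiT_def)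
    moreover have "vzero \<in> J" using J by (simp add: nichols_admissible_def)
    ultimately show "vzero \<in> phiT ` J" by (metis image_eqI)
  next
    fix x y assume "x \<in> phiT ` J" "y \<in> phiT ` J"
    then obtain u v where uv: "x = phiT u" "y = phiT v" "u \<in> J" "v \<in> J" by blast
    then have "vadd x y = phiT (vadd u v)" by (simp add: phiT_def lin_vadd fJ)
    moreover have "vadd u v \<in> J" using J uv by (simp add: nichols_admissible_def)
    ultimately show "vadd x y \<in> phiT ` J" by blast
  next
    fix a x assume "x \<in> phiT ` J"
    then obtain u where u: "x = phiT u" "u \<in> J" by blast
    then have "vsc a x = phiT (vsc a u)" by (simp add: phiT_def lin_vsc)
    moreover have "vsc a u \<in> J" using J u by (simp add: nichols_admissible_def)
    ultimately show "vsc a x \<in> phiT ` J" by blast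
  next
    fix x n assume "x \<in> phiT ` J"
    then obtain u where u: "x = phiT u" "u \<in> J" by blast
    let ?un = "\<lambda>w. if length w = n then u w else 0"
    have fun0: "fsupp ?un" using fJ[OF u(2)] unfolding fsupp_def
      by (rule finite_subset[rotated]) auto
    have "(\<lambda>w. if length w = n then x w else 0) = phiT ?un"
    proof
      fix w'
      obtain w where w: "w' = map \<sigma> w" using map_sigma_surj by blast
      show "(if length w' = n then x w' else 0) = phiT ?un w'"
        unfolding w u(1) phiT_apply[OF fJ[OF u(2)]] phiT_apply[OF fun0] by simp
    qed
    moreover have "?un \<in> J" using J u by (simp add: nichols_admissible_def)
    ultimately show "(\<lambda>w. if length w = n then x w else 0) \<in> phiT ` J" by blast
  next
    fix x and w' :: "'b list" assume "x \<in> phiT ` J" "length w' < 2"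
    then obtain u where u: "x = phiT u" "u \<in> J" by blast
    obtain w where w: "w' = map \<sigma> w" using map_sigma_surj by blast
    have "u w = 0" using J u \<open>length w' < 2\<close> w by (simp add: nichols_admissible_def)
    then show "x w' = 0" unfolding w u(1) phiT_apply[OF fJ[OF u(2)]] by simp
  next
    fix x a b assume "x \<in> phiT ` J" "a \<in> TV W" "b \<in> TV W"
    then obtain u where u: "x = phiT u" "u \<in> J" by blast
    obtain a' where a': "a' \<in> TV V" "phiT a' = a" using phiT_surj_TV \<open>a \<in> TV W\<close> by blast
    obtain b' where b': "b' \<in> TV V" "phiT b' = b" using phiT_surj_TV \<open>b \<in> TV W\<close> by blast
    have fa: "fsupp a'" "fsupp b'" using a' b' by (auto simp: TV_def)
    have "tmult (tmult a x) b = phiT (tmult (tmult a' u) b')"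
      using fa fJ[OF u(2)] by (simp add: phiT_tmult u(1) a'(2)[symmetric] b'(2)[symmetric])
    moreover have "tmult (tmult a' u) b' \<in> J" using J u a' b' by (simp add: nichols_admissible_def)
    ultimately show "tmult (tmult a x) b \<in> phiT ` J" by blast
  next
    fix x assume "x \<in> phiT ` J"
    then obtain u where u: "x = phiT u" "u \<in> J" by blast
    have "lin (comultT W) x = lin (\<lambda>(a, d). tens (phi_word a) (phi_word d)) (lin (comultT V) u)"
      using u phiT_comult fJ by simp
    also have "\<dots> \<in> coideal_target (phiT ` J) (TV W)"
      using J u JT by (intro phiT_coideal_target) (auto simp: nichols_admissible_def)
    finally show "lin (comultT W) x \<in> coideal_target (phiT ` J) (TV W)" .
  qed
qed

lemma nichols_ideal_phiT: "u \<in> nichols_ideal V \<Longrightarrow> phiT u \<in> nichols_ideal W"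
  using nichols_admissible_phiT unfolding nichols_ideal_def by blast

lemma nichols_ideal_phiT_iff:
  assumes "fsupp u"
  shows "phiT u \<in> nichols_ideal W \<longleftrightarrow> u \<in> nichols_ideal V"
proof
  interpret inverse: monomial_twist_iso psi W V "inv \<sigma>" "\<lambda>b'. 1 / c (inv \<sigma> b')"
    by (rule monomial_twist_iso_inverse)
  assume "phiT u \<in> nichols_ideal W"
  then have "phiT_inv (phiT u) \<in> nichols_ideal V" by (rule inverse.nichols_ideal_phiT)
  then show "u \<in> nichols_ideal V" using assms by (simp add: phiT_inv_phiT)
qed (rule nichols_ideal_phiT)

lemma lin_phi_bos_apply:
  assumes "fsupp u"
  shows "lin phi_bos u (w', h') = (\<Sum>h\<in>UNIV. psi h h' * phiT (\<lambda>w. u (w, h)) w')"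
proof -
  define A where "A = fst ` {p. u p \<noteq> 0}"
  have fA: "finite A" using assms by (simp add: A_def fsupp_def)
  have "lin phi_bos u (w', h') = (\<Sum>p\<in>A \<times> UNIV. u p * phi_bos p (w', h'))"
    by (rule lin_sum_superset) (use fA supp_subset_fst_times[of u] in \<open>auto simp: A_def\<close>)
  also have "\<dots> = (\<Sum>w\<in>A. \<Sum>h\<in>UNIV. u (w, h) * (phi_word w w' * psi h h'))"
    by (simp add: sum.cartesian_product tens_def phi_bos_def ptens_def split_def)
  also have "\<dots> = (\<Sum>h\<in>UNIV. psi h h' * (\<Sum>w\<in>A. u (w, h) * phi_word w w'))"
    by (subst sum.swap) (simp add: sum_distrib_left mult_ac)
  also have "\<dots> = (\<Sum>h\<in>UNIV. psi h h' * phiT (\<lambda>w. u (w, h)) w')"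
  proof (rule sum.cong[OF refl])
    fix h
    have "phiT (\<lambda>w. u (w, h)) w' = (\<Sum>w\<in>A. u (w, h) * phi_word w w')"
      unfolding phiT_def by (rule lin_sum_superset) (use fA supp_slice_subset_fst[of u h] in \<open>auto simp: A_def\<close>)
    then show "psi h h' * (\<Sum>w\<in>A. u (w, h) * phi_word w w') = psi h h' * phiT (\<lambda>w. u (w, h)) w'" by simp
  qed
  finally show ?thesis .
qed

lemma phiT_slice:
  assumes "fsupp u"
  shows "phiT (\<lambda>w. u (w, h0)) = (\<lambda>w'. \<Sum>h'\<in>UNIV. psi h' h0 * lin phi_bos u (w', h'))"
proof
  fix w'
  have "(\<Sum>h'\<in>UNIV. psi h' h0 * lin phi_bos u (w', h'))
      = (\<Sum>h'\<in>UNIV. \<Sum>h\<in>UNIV. psi h' h0 * (psi h h' * phiT (\<lambda>w. u (w, h)) w'))"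
    by (simp add: lin_phi_bos_apply[OF assms] sum_distrib_left)
  also have "\<dots> = (\<Sum>h\<in>UNIV. (\<Sum>h'\<in>UNIV. psi h h' * psi h' h0) * phiT (\<lambda>w. u (w, h)) w')"
    by (subst sum.swap) (simp add: sum_distrib_left sum_distrib_right mult_ac)
  also have "\<dots> = (\<Sum>h\<in>UNIV. e h h0 * phiT (\<lambda>w. u (w, h)) w')"
  proof -
    have "(\<Sum>h'\<in>UNIV. psi h h' * psi h' h0) = e h h0" for h
      using psi_invol[of h] lin_finite[of psi "psi h" h0] by simp
    then show ?thesis by simp
  qed
  also have "\<dots> = phiT (\<lambda>w. u (w, h0)) w'"
    by (simp add: e_def if_distrib[of "\<lambda>x. x * _"] sum.delta cong: if_cong)
  finally show "phiT (\<lambda>w. u (w, h0)) w' = (\<Sum>h'\<in>UNIV. psi h' h0 * lin phi_bos u (w', h'))" ..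
qed

lemma lin_phi_bos_BV: "u \<in> BV V \<Longrightarrow> lin phi_bos u \<in> BV W"
proof -
  assume u: "u \<in> BV V"
  have fu: "fsupp u" using u by (simp add: BV_def)
  have "fsupp (lin phi_bos u)" using fu by simp
  moreover have "set w' \<subseteq> ybas W" if nz: "lin phi_bos u (w', h') \<noteq> 0" for w' h'
  proof -
    obtain h where "phiT (\<lambda>w. u (w, h)) w' \<noteq> 0"
      using nz unfolding lin_phi_bos_apply[OF fu] by (metis (no_types, lifting) mult_zero_right sum.neutral)
    then obtain v where "u (v, h) \<noteq> 0" "w' = map \<sigma> v" using phiT_supp by blast
    moreover have "set v \<subseteq> ybas V" using u \<open>u (v, h) \<noteq> 0\<close> unfolding BV_def by blast
    ultimately show ?thesis using sigma_ybas by auto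
  qed
  ultimately show ?thesis unfolding BV_def by blast
qed

lemma lin_phi_bos_NV: "u \<in> NV V \<Longrightarrow> lin phi_bos u \<in> NV W"
proof -
  assume u: "u \<in> NV V"
  have uB: "u \<in> BV V" and fu: "fsupp u" using u by (auto simp: NV_def BV_def)
  have "(\<lambda>w'. lin phi_bos u (w', h')) \<in> nichols_ideal W" for h'
    unfolding lin_phi_bos_apply[OF fu]
    by (rule nichols_ideal_sum) (use u nichols_ideal_phiT in \<open>auto simp: NV_def\<close>)
  then show ?thesis using lin_phi_bos_BV[OF uB] by (simp add: NV_def)
qed

lemma NV_of_lin_phi_bos:
  assumes uB: "u \<in> BV V" and NF: "lin phi_bos u \<in> NV W"
  shows "u \<in> NV V"
proof -
  have fu: "fsupp u" using uB by (simp add: BV_def)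
  have "phiT (\<lambda>w. u (w, h0)) \<in> nichols_ideal W" for h0
    unfolding phiT_slice[OF fu] by (rule nichols_ideal_sum) (use NF in \<open>auto simp: NV_def\<close>)
  then show ?thesis
    using uB nichols_ideal_phiT_iff[OF fsupp_slice[OF fu]] by (simp add: NV_def)
qed

lemma lin_phi_bos_surj: "u' \<in> BV W \<Longrightarrow> \<exists>u\<in>BV V. lin phi_bos u = u'"
proof -
  interpret inverse: monomial_twist_iso psi W V "inv \<sigma>" "\<lambda>b'. 1 / c (inv \<sigma> b')"
    by (rule monomial_twist_iso_inverse)
  assume u': "u' \<in> BV W"
  have fu': "fsupp u'" using u' by (simp add: BV_def)
  have "lin phi_bos (inverse.phi_bos p) = e p" for p
  proof -
    obtain w' h' where p: "p = (w', h')" by (cases p)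
    have "phiT (inverse.phi_word w') = e w'"
      using phiT_phiT_inv[of "e w'"] by simp
    then show ?thesis
      unfolding p inverse.phi_bos_simp by (simp add: phi_bos_tens psi_invol)
  qed
  then have "lin phi_bos (lin inverse.phi_bos u') = u'"
    using fu' by (simp add: lin_lin lin_id)
  then show ?thesis using inverse.lin_phi_bos_BV[OF u'] by blast
qed

lemma bcounit_phi_bos: "lin (\<lambda>q (_::unit). bcounit q) (phi_bos (w, h)) () = bcounit (w, h)"
proof -
  have "lin (\<lambda>q (_::unit). bcounit q) (phi_bos (w, h))
      = vsc (coef_word w) (lin (\<lambda>k (_::unit). bcounit (map \<sigma> w, k)) (psi h))"
    by (simp add: phi_word_def tens_vsc_left lin_vsc lin_tens)
  also have "\<dots> = vsc (coef_word w) (\<lambda>_. counitT (map \<sigma> w))"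
    by (simp add: bcounit_def h8counit_def lin_const_finite psi_counit)
  finally show ?thesis
    by (cases w) (simp_all add: vsc_def bcounit_def counitT_def h8counit_def)
qed

theorem bos_iso: "bos_iso V W"
  unfolding bos_iso_def
proof (intro exI[of _ phi_bos] conjI ballI impI)
  fix p assume "p \<in> bbasis V"
  then have "e p \<in> BV V" by (simp add: BV_def) (auto simp: bbasis_def e_def split: if_splits)
  then show "phi_bos p \<in> BV W" using lin_phi_bos_BV by fastforce
next
  show "\<exists>u\<in>BV V. vsub (lin phi_bos u) u' \<in> NV W" if "u' \<in> BV W" for u'
    using lin_phi_bos_surj[OF that] vzero_NV by (metis vsub_self)
  show "vsub (lin phi_bos bunit) bunit \<in> NV W"
    by (simp add: bunit_def phi_word_def psi_unit vsub_self vzero_NV)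
  fix p q assume "p \<in> bbasis V" "q \<in> bbasis V"
  show "vsub (lin phi_bos (bm V p q)) (bmult W (phi_bos p) (phi_bos q)) \<in> NV W"
    by (cases p, cases q) (simp add: phi_bos_bm vsub_self vzero_NV)
next
  fix p
  show "vsub (lin (bc W) (phi_bos p)) (lin (\<lambda>(p1, p2). tens (phi_bos p1) (phi_bos p2)) (bc V p))
      \<in> lspan ({tens n a |n a. n \<in> NV W \<and> a \<in> BV W} \<union> {tens a n |n a. n \<in> NV W \<and> a \<in> BV W})"
    using phi_bos_bc[of "fst p" "snd p"] by (simp add: vsub_self vzero_fun lspan_zero)
  show "lin (\<lambda>q (_::unit). bcounit q) (phi_bos p) () = bcounit p"
    using bcounit_phi_bos[of "fst p" "snd p"] by simp
qed (use lin_phi_bos_NV NV_of_lin_phi_bos in auto)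

end

section \<open>The modules of the corollary\<close>

lemma yact_Mbg_apply: "yact (Mbg b0 g) (a, b, c) () () =
   (if a then b0 * b0 else 1) * (if b then b0 * b0 else 1) * (if c then b0 else 1)"
proof -
  have "yact (Mbg b0 g) (a, b, c) () =
      vsc ((if a then b0 * b0 else 1) * (if b then b0 * b0 else 1) * (if c then b0 else 1)) (e ())"
    by (cases a; cases b; cases c; simp add: Mbg_def gen_act_def lin_vsc power2_eq_square mult_ac)
  then show ?thesis by (simp add: vsc_def e_def)
qed

lemma Mbg_tau3_iso:
  fixes b0 :: "'k::field_char_0"
  assumes b0: "b0 * b0 = -1" and g: "(g, g') \<in> {(hx, hy), (hy, hx)}"
  shows "monomial_twist_iso tau3b (Mbg b0 g) (Mbg (- b0) g') id (\<lambda>_. 1)"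
proof (intro monomial_twist_iso.intro h8_involution_tau3b monomial_twist_iso_axioms.intro)
  show "bij (id :: unit \<Rightarrow> unit)" by simp
  show "(1::'k) \<noteq> 0" by simp
  show "id ` ybas (Mbg b0 g) = ybas (Mbg (- b0) g')" by (simp add: Mbg_def)
  show "fsupp (yact (Mbg b0 g) h b)" "fsupp (ycoact (Mbg b0 g) b)"
    "fsupp (yact (Mbg (- b0) g') h b)" "fsupp (ycoact (Mbg (- b0) g') b)" for h b by simp_all
next
  fix h :: hb and b :: unit
  obtain x y z where h: "h = (x, y, z)" by (cases h)
  have "yact (Mbg (- b0) g') h () () = lin (\<lambda>g0. yact (Mbg b0 g) g0 ()) (tau3b h) ()"
    unfolding h lin_finite tau3b_eq_coeff
    using b0 by (cases x; cases y; cases z; simp add: sum_UNIV_hb yact_Mbg_apply tau3_coeff_def algebra_simps)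
  then show "vsc 1 (yact (Mbg (- b0) g') h (id b)) = lin (\<lambda>g0. lin (\<lambda>d. vsc 1 (e (id d))) (yact (Mbg b0 g) g0 b)) (tau3b h)"
    by (simp add: lin_id fun_eq_iff)
next
  fix b :: unit
  show "vsc 1 (ycoact (Mbg (- b0) g') (id b)) = lin (\<lambda>(g0, d). tens (tau3b g0) (vsc 1 (e (id d)))) (ycoact (Mbg b0 g) b)"
    using g by (auto simp: Mbg_def tau3b_hx tau3b_hy)
qed

lemma yact_Mpair_apply: "yact (Mpair g1 g2) (a, b, c) v q =
   (if q = (v \<noteq> c) then (if a \<and> q then -1 else 1) * (if b \<and> \<not> q then -1 else 1) else (0::'k::field_char_0))"
  by (cases a; cases b; cases c; cases v; cases q; simp add: Mpair_def gen_act_def lin_finite sum_UNIV_bool vsc_def e_def)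

lemma Mpair_tau3_iso:
  assumes g: "(g1, g2, g1', g2') \<in> {(hxy, hx, hy, hxy), (hy, hxy, hxy, hx)}"
  shows "monomial_twist_iso tau3b (Mpair g1 g2 :: ('k::field_char_0, bool) ydm) (Mpair g1' g2') Not (\<lambda>_. 1)"
proof (intro monomial_twist_iso.intro h8_involution_tau3b monomial_twist_iso_axioms.intro)
  show "bij Not" by (simp add: bij_def inj_def surj_def) (metis (full_types))
  show "(1::'k) \<noteq> 0" by simp
  show "Not ` ybas (Mpair g1 g2 :: ('k, bool) ydm) = ybas (Mpair g1' g2' :: ('k, bool) ydm)"
    by (simp add: Mpair_def) (metis (full_types) surj_def bij_def[of Not] \<open>bij Not\<close>)
  show "fsupp (yact (Mpair g1 g2 :: ('k, bool) ydm) h b)" "fsupp (ycoact (Mpair g1 g2 :: ('k, bool) ydm) b)"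
    "fsupp (yact (Mpair g1' g2' :: ('k, bool) ydm) h b)" "fsupp (ycoact (Mpair g1' g2' :: ('k, bool) ydm) b)" for h b by simp_all
next
  fix h :: hb and v :: bool
  obtain x y z where h: "h = (x, y, z)" by (cases h)
  have "vsc 1 (yact (Mpair g1' g2' :: ('k, bool) ydm) h (\<not> v)) q = lin (\<lambda>g0. lin (\<lambda>d. vsc 1 (e (\<not> d))) (yact (Mpair g1 g2) g0 v)) (tau3b h) q" for q
    unfolding h lin_finite tau3b_eq_coeff
    by (cases x; cases y; cases z; cases v; cases q; simp add: sum_UNIV_hb sum_UNIV_bool yact_Mpair_apply tau3_coeff_def e_def)
  then show "vsc 1 (yact (Mpair g1' g2' :: ('k, bool) ydm) h (\<not> v)) = lin (\<lambda>g0. lin (\<lambda>d. vsc 1 (e (\<not> d))) (yact (Mpair g1 g2) g0 v)) (tau3b h)"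
    by (simp add: fun_eq_iff)
next
  fix v :: bool
  show "vsc 1 (ycoact (Mpair g1' g2') (\<not> v)) = lin (\<lambda>(g0, d). tens (tau3b g0) (vsc 1 (e (\<not> d)))) (ycoact (Mpair g1 g2 :: ('k, bool) ydm) v)"
    using g by (cases v) (auto simp: Mpair_def tau3b_hx tau3b_hy tau3b_hxy)
qed

lemma yact_Wmod_apply: "yact (Wmod i b1) (a, b, c) v q =
   (if q = v then (if v then (if a then -1 else 1) * (if b then -1 else 1) * (if c then i * b1 else 1)
                   else (if c then -1 else 1)) else (0::'k::field_char_0))"
  by (cases a; cases b; cases c; cases v; cases q; simp add: Wmod_def gen_act_def lin_finite sum_UNIV_bool vsc_def e_def)

lemma f_idem_apply: "f_idem j k (a, b, c) = (if c then 0 else 1/4 * (if a then (-1)^j else 1) * (if b then (-1)^k else 1) :: 'k::field_char_0)"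
  unfolding f_idem_def h8mult_def bil_def lin_finite h8m_eq_coeff
  by (cases a; cases b; cases c; simp add: sum_UNIV_hb h8m_coeff_def vsc_def vadd_def e_def h1_def hx_def hy_def algebra_simps)

definition bool_sign :: "bool \<Rightarrow> 'k::field_char_0" where "bool_sign a = (if a then -1 else 1)"

lemma ycoact_Wmod_apply: "ycoact (Wmod i b1) v ((a, b, c), d) =
   (if c then 1/4 * (if d = v then 1 + (if v then 1 else -1) * (i * b1) * (bool_sign a * bool_sign b)
                     else bool_sign a + (if v then -1 else 1) * (i * b1) * bool_sign b) else (0::'k::field_char_0))"
  unfolding Wmod_def
  by (cases a; cases b; cases c; cases v; cases d;
      simp add: h8mult_def bil_def lin_finite h8m_eq_coeff sum_UNIV_hb h8m_coeff_def vsc_def vadd_def vsub_def e_def tens_def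
         f_idem_apply hz_def bool_sign_def algebra_simps)

lemma Wmod_tau3_iso:
  fixes i b1 :: "'k::field_char_0"
  assumes i: "i * i = -1" and b1: "b1 = 1 \<or> b1 = -1"
  shows "monomial_twist_iso tau3b (Wmod i b1) (Wmod i (- b1)) id (\<lambda>v. if v then - i * b1 else 1)"
proof -
  have i2: "i * (i * x) = - x" for x using i by (metis mult.assoc mult_minus1)
  show ?thesis
  proof (intro monomial_twist_iso.intro h8_involution_tau3b monomial_twist_iso_axioms.intro)
    show "(if v then - i * b1 else 1) \<noteq> 0" for v using i b1 by auto
  next
    fix h :: hb and v :: bool
    obtain x y z where h: "h = (x, y, z)" by (cases h)
    have "vsc (if v then - i * b1 else 1) (yact (Wmod i (- b1)) h (id v)) q
       = lin (\<lambda>g0. lin (\<lambda>d. vsc (if d then - i * b1 else 1) (e (id d))) (yact (Wmod i b1) g0 v)) (tau3b h) q"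
      for q
      unfolding h lin_finite tau3b_eq_coeff
      using b1 by (cases x; cases y; cases z; cases v; cases q;
          auto simp: sum_UNIV_hb sum_UNIV_bool yact_Wmod_apply tau3_coeff_def e_def vsc_def algebra_simps i i2)
    then show "vsc (if v then - i * b1 else 1) (yact (Wmod i (- b1)) h (id v))
       = lin (\<lambda>g0. lin (\<lambda>d. vsc (if d then - i * b1 else 1) (e (id d))) (yact (Wmod i b1) g0 v)) (tau3b h)"
      by (simp add: fun_eq_iff)
  next
    fix v :: bool
    have "vsc (if v then - i * b1 else 1) (ycoact (Wmod i (- b1)) (id v)) ((a, b, c), d)
       = lin (\<lambda>(g0, d). tens (tau3b g0) (vsc (if d then - i * b1 else 1) (e (id d))))
           (ycoact (Wmod i b1) v) ((a, b, c), d)" for a b c d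
      unfolding lin_finite tau3b_eq_coeff
      using b1 by (cases a; cases b; cases c; cases v; cases d;
          auto simp: sum_UNIV_prod sum_UNIV_bool ycoact_Wmod_apply tau3_coeff_def e_def vsc_def tens_def
            bool_sign_def algebra_simps i i2) (simp_all add: field_simps)
    then show "vsc (if v then - i * b1 else 1) (ycoact (Wmod i (- b1)) (id v))
       = lin (\<lambda>(g0, d). tens (tau3b g0) (vsc (if d then - i * b1 else 1) (e (id d)))) (ycoact (Wmod i b1) v)"
      by (simp add: fun_eq_iff)
  qed (simp_all add: Wmod_def)
qed

section \<open>Direct sums and the corollary\<close>

lemma ydsum_simps[simp]:
  "yact (ydsum X Y) h (Inl b) = vmap Inl (yact X h b)"
  "yact (ydsum X Y) h (Inr c) = vmap Inr (yact Y h c)"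
  "ycoact (ydsum X Y) (Inl b) = vmap (\<lambda>(g, b'). (g, Inl b')) (ycoact X b)"
  "ycoact (ydsum X Y) (Inr c) = vmap (\<lambda>(g, c'). (g, Inr c')) (ycoact Y c)"
  "ybas (ydsum X Y) = Inl ` ybas X \<union> Inr ` ybas Y"
  by (simp_all add: ydsum_def)

lemma ydpow_simps[simp]:
  "yact (ydpow n X) h (j, b) = vmap (\<lambda>b'. (j, b')) (yact X h b)"
  "ycoact (ydpow n X) (j, b) = vmap (\<lambda>(g, b'). (g, (j, b'))) (ycoact X b)"
  "ybas (ydpow n X) = {(j, b). j < n \<and> b \<in> ybas X}"
  by (simp_all add: ydpow_def)

lemma lin_vmap_snd:
  "fsupp u \<Longrightarrow> lin (\<lambda>(g, d). F g d) (vmap (\<lambda>(g, d). (g, f d)) u) = lin (\<lambda>(g, d). F g (f d)) u"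
  by (simp add: lin_vmap split_def)

lemma monomial_twist_iso_ydsum:
  assumes A: "monomial_twist_iso psi V1 W1 \<sigma>1 c1" and B: "monomial_twist_iso psi V2 W2 \<sigma>2 c2"
  shows "monomial_twist_iso psi (ydsum V1 V2) (ydsum W1 W2) (map_sum \<sigma>1 \<sigma>2) (case_sum c1 c2)"
proof -
  interpret A: monomial_twist_iso psi V1 W1 \<sigma>1 c1 by (rule A)
  interpret B: monomial_twist_iso psi V2 W2 \<sigma>2 c2 by (rule B)
  show ?thesis
  proof (intro monomial_twist_iso.intro A.h8_involution_axioms monomial_twist_iso_axioms.intro)
    show "bij (map_sum \<sigma>1 \<sigma>2)"
      by (rule o_bij[of "map_sum (inv \<sigma>1) (inv \<sigma>2)"])
        (simp_all add: fun_eq_iff sum.map_comp comp_def sum.map_ident)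
    show "map_sum \<sigma>1 \<sigma>2 ` ybas (ydsum V1 V2) = ybas (ydsum W1 W2)"
      by (simp add: image_Un image_image flip: A.sigma_ybas B.sigma_ybas)
    show "fsupp (yact (ydsum V1 V2) h x)" "fsupp (ycoact (ydsum V1 V2) x)"
      "fsupp (yact (ydsum W1 W2) h x)" "fsupp (ycoact (ydsum W1 W2) x)" for h x
      by (cases x; simp)+
  next
    fix h x
    show "vsc (case_sum c1 c2 x) (yact (ydsum W1 W2) h (map_sum \<sigma>1 \<sigma>2 x)) =
        lin (\<lambda>g. lin (\<lambda>d. vsc (case_sum c1 c2 d) (e (map_sum \<sigma>1 \<sigma>2 d))) (yact (ydsum V1 V2) g x)) (psi h)"
      by (cases x) (simp_all add: vmap_vsc[symmetric] A.yact_intertwine B.yact_intertwine vmap_lin lin_vmap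
          vmap_vsc)
  next
    fix x
    show "vsc (case_sum c1 c2 x) (ycoact (ydsum W1 W2) (map_sum \<sigma>1 \<sigma>2 x)) =
        lin (\<lambda>(g, d). tens (psi g) (vsc (case_sum c1 c2 d) (e (map_sum \<sigma>1 \<sigma>2 d)))) (ycoact (ydsum V1 V2) x)"
      by (cases x) (simp_all add: vmap_vsc[symmetric] A.ycoact_intertwine B.ycoact_intertwine vmap_lin_pair vmap_map_snd_tens
          lin_vmap_snd vmap_vsc)
  qed (simp add: A.c_nonzero B.c_nonzero split: sum.splits)
qed

lemma monomial_twist_iso_ydpow:
  assumes A: "monomial_twist_iso psi V W \<sigma> c"
  shows "monomial_twist_iso psi (ydpow n V) (ydpow n W) (map_prod id \<sigma>) (c \<circ> snd)"
proof -
  interpret A: monomial_twist_iso psi V W \<sigma> c by (rule A)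
  show ?thesis
  proof (intro monomial_twist_iso.intro A.h8_involution_axioms monomial_twist_iso_axioms.intro)
    show "bij (map_prod id \<sigma>)"
      using bij_betw_map_prod[OF bij_id A.bij_sigma] by simp
    show "map_prod id \<sigma> ` ybas (ydpow n V) = ybas (ydpow n W)"
      by (auto simp: image_iff simp flip: A.sigma_ybas)
  next
    fix h x
    show "vsc ((c \<circ> snd) x) (yact (ydpow n W) h (map_prod id \<sigma> x)) =
        lin (\<lambda>g. lin (\<lambda>d. vsc ((c \<circ> snd) d) (e (map_prod id \<sigma> d))) (yact (ydpow n V) g x)) (psi h)"
      by (cases x) (simp add: vmap_vsc[symmetric] A.yact_intertwine vmap_lin lin_vmap vmap_vsc)
  next
    fix x
    show "vsc ((c \<circ> snd) x) (ycoact (ydpow n W) (map_prod id \<sigma> x)) =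
        lin (\<lambda>(g, d). tens (psi g) (vsc ((c \<circ> snd) d) (e (map_prod id \<sigma> d)))) (ycoact (ydpow n V) x)"
      by (cases x) (simp add: vmap_vsc[symmetric] A.ycoact_intertwine vmap_lin_pair vmap_map_snd_tens
          lin_vmap_snd vmap_vsc)
  qed (auto simp: A.c_nonzero)
qed

lemma monomial_twist_iso_relabel:
  assumes iso: "monomial_twist_iso psi V W \<sigma> c" and \<tau>: "bij \<tau>"
    and bas: "\<tau> ` ybas W = ybas W'"
    and act: "\<And>h x. yact W' h (\<tau> x) = vmap \<tau> (yact W h x)"
    and coact: "\<And>x. ycoact W' (\<tau> x) = vmap (\<lambda>(g, d). (g, \<tau> d)) (ycoact W x)"
  shows "monomial_twist_iso psi V W' (\<tau> \<circ> \<sigma>) c"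
proof -
  interpret monomial_twist_iso psi V W \<sigma> c by (rule iso)
  have \<tau>_inv: "\<tau> (inv \<tau> y) = y" for y using \<tau> by (simp add: bij_is_surj surj_f_inv_f)
  show ?thesis
  proof (intro monomial_twist_iso.intro h8_involution_axioms monomial_twist_iso_axioms.intro)
    show "bij (\<tau> \<circ> \<sigma>)" using \<tau> bij_sigma by (rule bij_comp[rotated])
    show "(\<tau> \<circ> \<sigma>) ` ybas V = ybas W'"
      unfolding bas[symmetric] sigma_ybas[symmetric] by (rule image_comp[symmetric])
    show "fsupp (yact W' h y)" "fsupp (ycoact W' y)" for h y
      using act[of h "inv \<tau> y"] coact[of "inv \<tau> y"] by (simp_all add: \<tau>_inv)
  next
    fix h b
    show "vsc (c b) (yact W' h ((\<tau> \<circ> \<sigma>) b)) = lin (\<lambda>g. lin (\<lambda>d. vsc (c d) (e ((\<tau> \<circ> \<sigma>) d))) (yact V g b)) (psi h)"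
      by (simp add: act vmap_vsc[symmetric] yact_intertwine vmap_lin vmap_vsc)
  next
    fix b
    show "vsc (c b) (ycoact W' ((\<tau> \<circ> \<sigma>) b)) = lin (\<lambda>(g, d). tens (psi g) (vsc (c d) (e ((\<tau> \<circ> \<sigma>) d)))) (ycoact V b)"
      by (simp add: coact vmap_vsc[symmetric] ycoact_intertwine vmap_lin_pair vmap_map_snd_tens vmap_vsc)
  qed (simp_all add: c_nonzero fsupp_yact_V fsupp_ycoact_V)
qed

definition swap12 :: "'a + ('a + 'b) \<Rightarrow> 'a + ('a + 'b)" where
  "swap12 x = (case x of Inl a \<Rightarrow> Inr (Inl a) | Inr (Inl a) \<Rightarrow> Inl a | Inr (Inr b) \<Rightarrow> Inr (Inr b))"

lemma swap12_simps[simp]: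
  "swap12 (Inl a) = Inr (Inl a)" "swap12 (Inr (Inl a)) = Inl a" "swap12 (Inr (Inr b)) = Inr (Inr b)"
  by (simp_all add: swap12_def)

lemma bij_swap12: "bij swap12"
  by (rule o_bij[of swap12]) (auto simp: fun_eq_iff swap12_def split: sum.splits)

lemma yact_ydsum_swap12:
  "yact (ydsum B (ydsum A C)) h (swap12 x) = vmap swap12 (yact (ydsum A (ydsum B C)) h x)"
proof (cases x)
  case (Inr y)
  then show ?thesis by (cases y) (simp_all add: vmap_vmap)
qed (simp add: vmap_vmap)

lemma ycoact_ydsum_swap12:
  "ycoact (ydsum B (ydsum A C)) (swap12 x) = vmap (\<lambda>(g, d). (g, swap12 d)) (ycoact (ydsum A (ydsum B C)) x)"
proof (cases x)
  case (Inr y)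
  then show ?thesis by (cases y) (simp_all add: vmap_vmap split_def)
qed (simp add: vmap_vmap split_def)

lemma ybas_ydsum_swap12: "swap12 ` ybas (ydsum A (ydsum B C)) = ybas (ydsum B (ydsum A C))"
  by (auto simp: image_Un image_image)

text \<open>The images of the first two summands appear in the opposite order in \<open>Omega3\<close> and
  \<open>Omega5\<close>, whence the relabelling by \<open>swap12\<close>.\<close>

lemma monomial_twist_iso_Omega:
  fixes P Q P' Q' :: "('k::field, 'a) ydm"
  assumes "monomial_twist_iso psi P P' \<sigma>P cP" "monomial_twist_iso psi Q Q' \<sigma>Q cQ"
    and "monomial_twist_iso psi R R' \<sigma>R cR"
  shows "\<exists>\<sigma> c. monomial_twist_iso psi (ydsum (ydpow n1 P) (ydsum (ydpow n2 Q) R))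
                              (ydsum (ydpow n2 Q') (ydsum (ydpow n1 P') R')) \<sigma> c"
proof -
  have "monomial_twist_iso psi (ydsum (ydpow n1 P) (ydsum (ydpow n2 Q) R))
      (ydsum (ydpow n1 P') (ydsum (ydpow n2 Q') R'))
      (map_sum (map_prod id \<sigma>P) (map_sum (map_prod id \<sigma>Q) \<sigma>R)) (case_sum (cP \<circ> snd) (case_sum (cQ \<circ> snd) cR))"
    by (intro monomial_twist_iso_ydsum monomial_twist_iso_ydpow assms)
  from monomial_twist_iso_relabel[OF this bij_swap12 ybas_ydsum_swap12 yact_ydsum_swap12 ycoact_ydsum_swap12]
  show ?thesis by blast
qed

theorem corollary5p3:
  fixes i :: "'k::field_char_0"
  assumes alg_closed: "\<forall>p :: 'k poly. degree p > 0 \<longrightarrow> (\<exists>a. poly p a = 0)"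
    and i_sq: "i * i = -1"
  shows "(\<forall>b \<in> {1, -1 :: 'k}. yd_iso (twist tau3 (Mbg (b * i) hx)) (Mbg (- b * i) hy))
       \<and> yd_iso (twist tau3 (Mpair hxy hx :: ('k, bool) ydm)) (Mpair hy hxy)
       \<and> (\<forall>b1 \<in> {1, -1 :: 'k}. yd_iso (twist tau3 (Wmod i b1)) (Wmod i (- b1)))
       \<and> (\<forall>n1 n2. bos_iso (Omega2 i n1 n2) (Omega3 i n2 n1)
                 \<and> bos_iso (Omega4 i n1 n2) (Omega5 i n2 n1))"
proof (intro conjI ballI allI)
  have Mbg: "monomial_twist_iso tau3b (Mbg b g) (Mbg (- b) g') id (\<lambda>_. 1)"
    if "b = i \<or> b = - i" "(g, g') \<in> {(hx, hy), (hy, hx)}" for b g g'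
    using that i_sq by (intro Mbg_tau3_iso) auto
  have Mpair: "monomial_twist_iso tau3b (Mpair hxy hx :: ('k, bool) ydm) (Mpair hy hxy) Not (\<lambda>_. 1)"
    by (rule Mpair_tau3_iso) simp
  have Wmod: "monomial_twist_iso tau3b (Wmod i b1) (Wmod i (- b1)) id (\<lambda>v. if v then - i * b1 else 1)"
    if "b1 = 1 \<or> b1 = -1" for b1
    using i_sq that by (rule Wmod_tau3_iso)
  show "yd_iso (twist tau3 (Mbg (b * i) hx)) (Mbg (- b * i) hy)" if "b \<in> {1, -1}" for b
    using monomial_twist_iso.yd_iso_twist[OF Mbg[of "b * i" hx hy]] that
    by (auto simp: tau3_def Mbg_def)
  show "yd_iso (twist tau3 (Mpair hxy hx :: ('k, bool) ydm)) (Mpair hy hxy)"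
    using monomial_twist_iso.yd_iso_twist[OF Mpair] by (simp add: tau3_def Mpair_def)
  show "yd_iso (twist tau3 (Wmod i b1)) (Wmod i (- b1))" if "b1 \<in> {1, -1}" for b1
    using monomial_twist_iso.yd_iso_twist[OF Wmod[of b1]] that by (auto simp: tau3_def Wmod_def)
  fix n1 n2
  have "\<exists>\<sigma> c. monomial_twist_iso tau3b (Omega2 i n1 n2) (Omega3 i n2 n1) \<sigma> c"
    unfolding Omega2_def Omega3_def
    using monomial_twist_iso_Omega[OF Mbg[of i hx hy] Mbg[of "- i" hx hy] Mpair] by simp
  then show "bos_iso (Omega2 i n1 n2) (Omega3 i n2 n1)" using monomial_twist_iso.bos_iso by blast
  have "\<exists>\<sigma> c. monomial_twist_iso tau3b (Omega4 i n1 n2) (Omega5 i n2 n1) \<sigma> c"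
    unfolding Omega4_def Omega5_def
    using monomial_twist_iso_Omega[OF Mbg[of i hx hy] Mbg[of i hy hx] Wmod[of 1]] by simp
  then show "bos_iso (Omega4 i n1 n2) (Omega5 i n2 n1)" using monomial_twist_iso.bos_iso by blast
qed

end
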